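(* Let $\phi_1,\dots,\phi_m$ be eigenfunctions and $\psi_1,\dots,\psi_m$ adjoint eigenfunctions of the dmKP hierarchy, and let $\partial_\alpha$ be the squared eigenfunction symmetry flow $\partial_{\alpha}L=[\sum_{i=1}^{m}\phi_{i}\Delta^{-1}\varGamma\psi_{i}\Delta,L]$, acting on the dressing operator by $\partial_{\alpha}Z=\sum_{i=1}^{m}\phi_{i}\Delta^{-1}\varGamma\psi_{i}\Delta Z$. Then the wave function and adjoint wave function satisfy \[ \partial_{\alpha}w(n,t,\lambda)=\sum_{i=1}^{m}\phi_{i}\,\hat S\big(\Delta w(n,t,\lambda),\varGamma\psi_{i}\big),\qquad \partial_{\alpha}w^{*}(n,t,\lambda)=-\sum_{i=1}^{m}\psi_{i}\,S\big(\phi_{i},\Delta w^{*}(n,t,\lambda)\big). \]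
   Context: $\varGamma g(n)=g(n+1)$, $\Delta=\varGamma-I$, $\Delta^*=\varGamma^{-1}-I$; pseudo-difference operators $\sum_{i\le m}a_i\Delta^i$ are multiplied by $\Delta^{k}\circ g=\sum_{i\ge0}\binom ki (\Delta^{i}g)(n+k-i)\Delta^{k-i}$, with adjoint $(a\Delta^k)^*=(\Delta^* )^k a$; $(A)_{\ge1}$ is the part of positive $\Delta$-order; $\operatorname{res}_\Delta$ is the coefficient of $\Delta^{-1}$. The dmKP hierarchy is $\partial_{t_i}L=[(L^i)_{\ge1},L]$, $L=Z\Delta Z^{-1}=\Delta+u_0+u_1\Delta^{-1}+\cdots$, $Z=z_0+z_1\Delta^{-1}+\cdots$. With $\xi(t,\lambda)=\sum_k t_k\lambda^k$, the wave function is $w(n,t,\lambda)=Z(n)(1+\lambda)^ne^{\xi(t,\lambda)}$ and the adjoint wave function $w^*(n,t,\lambda)=(Z^{-1}(n-1)\Delta^{-1})^*(1+\lambda)^{-n}e^{-\xi(t,\lambda)}$. Eigenfunctions satisfy $\phi_{t_i}=(L^i)_{\ge1}(\phi)$; adjoint eigenfunctions satisfy $\psi_{t_i}=-(\Delta^{-1}(L^i)^*_{\ge1}\Delta)(\psi)$. The squared eigenfunction potential $S(\phi,\Delta\psi)$ satisfies $\Delta S(\phi,\Delta\psi)=\phi\,(\Delta\psi)$ and $\partial_{t_i}S(\phi,\Delta\psi)=\operatorname{res}_{\Delta}(\varGamma\Delta^{-1}(\Delta\psi)(L^{i})_{\geq1}\phi\Delta^{-1})$; and $\hat S(\Delta\phi,\varGamma\psi)=\phi\psi-S(\phi,\Delta\psi)$,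 so that $\Delta\hat S(\Delta\phi,\varGamma\psi)=(\Delta\phi)\varGamma\psi$. *)

theory Defs
  imports "HOL-Computational_Algebra.Formal_Laurent_Series"
begin

text \<open>
A "function of (n,t,alpha)" is modelled as a map int => 'a, where the
commutative ring 'a carries the dependence on the times: the derivations
dt k (k >= 1) play the role of the partial derivatives in t_k and da the role of
the symmetry flow partial_alpha.  Pseudo-difference operators
sum_{j <= m} a_j Delta^j are maps P :: int => int => 'r with P j = a_j
(coefficient of Delta^j), vanishing for large j.
\<close>

type_synonym 'r fn = "int \<Rightarrow> 'r"
type_synonym 'r pdo = "int \<Rightarrow> int \<Rightarrow> 'r"

definition fsum :: "('b \<Rightarrow> 'r::comm_monoid_add) \<Rightarrow> 'r" where
  "fsum f = sum f {x. f x \<noteq> 0}"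

text \<open>Integer binomial coefficient binom(k,i), k :: int, i :: nat.\<close>
definition ibinom :: "int \<Rightarrow> nat \<Rightarrow> int" where
  "ibinom k i = (if 0 \<le> k then int (nat k choose i)
                 else (-1) ^ i * int ((nat (- k) + i - 1) choose i))"

text \<open>Shift Gamma^k, difference Delta^i, adjoint difference (Delta^*)^i on functions.\<close>
definition shf :: "int \<Rightarrow> 'r fn \<Rightarrow> 'r fn" where
  "shf k f = (\<lambda>n. f (n + k))"

primrec fdiff :: "nat \<Rightarrow> ('r::ab_group_add) fn \<Rightarrow> 'r fn" where
  "fdiff 0 f = f"
| "fdiff (Suc i) f = (\<lambda>n. fdiff i f (n + 1) - fdiff i f n)"

primrec fdiffs :: "nat \<Rightarrow> ('r::ab_group_add) fn \<Rightarrow> 'r fn" where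
  "fdiffs 0 f = f"
| "fdiffs (Suc i) f = (\<lambda>n. fdiffs i f (n - 1) - fdiffs i f n)"

definition pdo_wf :: "('r::zero) pdo \<Rightarrow> bool" where
  "pdo_wf P \<longleftrightarrow> (\<exists>m. \<forall>j>m. \<forall>n. P j n = 0)"

text \<open>Product, via Delta^k o g = sum_{i>=0} binom(k,i) (Delta^i g)(n+k-i) Delta^(k-i).\<close>
definition pdo_mult :: "('r::comm_ring_1) pdo \<Rightarrow> 'r pdo \<Rightarrow> 'r pdo" where
  "pdo_mult A B = (\<lambda>r n. fsum (\<lambda>(k::int, i::nat).
      A k n * of_int (ibinom k i) * fdiff i (B (r - k + int i)) (n + k - int i)))"

definition pdo_one :: "('r::{zero,one}) pdo" where
  "pdo_one = (\<lambda>j n. if j = 0 then 1 else 0)"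

definition pdo_Delta :: "('r::{zero,one}) pdo" where
  "pdo_Delta = (\<lambda>j n. if j = 1 then 1 else 0)"

definition pdo_Dinv :: "('r::{zero,one}) pdo" where
  "pdo_Dinv = (\<lambda>j n. if j = -1 then 1 else 0)"

text \<open>Gamma = I + Delta.\<close>
definition pdo_Gamma :: "('r::{zero,one}) pdo" where
  "pdo_Gamma = (\<lambda>j n. if j = 0 \<or> j = 1 then 1 else 0)"

definition pdo_fn :: "('r::zero) fn \<Rightarrow> 'r pdo" where
  "pdo_fn f = (\<lambda>j n. if j = 0 then f n else 0)"

definition pdo_pow :: "('r::comm_ring_1) pdo \<Rightarrow> nat \<Rightarrow> 'r pdo" where
  "pdo_pow P k = (pdo_mult P ^^ k) pdo_one"

definition pdo_neg :: "('r::ab_group_add) pdo \<Rightarrow> 'r pdo" where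
  "pdo_neg P = (\<lambda>j n. - P j n)"

definition pdo_pos :: "('r::zero) pdo \<Rightarrow> 'r pdo" where
  "pdo_pos P = (\<lambda>j n. if 1 \<le> j then P j n else 0)"

definition pdo_nonpos :: "('r::zero) pdo \<Rightarrow> 'r pdo" where
  "pdo_nonpos P = (\<lambda>j n. if j \<le> 0 then P j n else 0)"

definition pdo_res :: "'r pdo \<Rightarrow> 'r fn" where
  "pdo_res P = P (-1)"

definition pdo_map :: "('r \<Rightarrow> 's) \<Rightarrow> 'r pdo \<Rightarrow> 's pdo" where
  "pdo_map h P = (\<lambda>j n. h (P j n))"

definition pdo_apply :: "('r::comm_ring_1) pdo \<Rightarrow> 'r fn \<Rightarrow> 'r fn" where
  "pdo_apply P f = (\<lambda>n. fsum (\<lambda>j::nat. P (int j) n * fdiff j f n))"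

text \<open>For B = sum_{j>=1} b_j Delta^j, the function (Delta^{-1} B^* Delta)(psi), where
  B^* = sum_j (Delta^*)^j b_j.  Since Delta^* = -Gamma^{-1} Delta, one has
  Delta^{-1} (Delta^*)^j = - Gamma^{-1} (Delta^*)^(j-1) for j >= 1.\<close>
definition adj_conj_apply :: "('r::comm_ring_1) pdo \<Rightarrow> 'r fn \<Rightarrow> 'r fn" where
  "adj_conj_apply B psi = (\<lambda>n. - fsum (\<lambda>j::nat. if 1 \<le> j then
        fdiffs (j - 1) (\<lambda>m. B (int j) m * fdiff 1 psi m) (n - 1) else 0))"

definition is_derivation :: "('a::comm_ring_1 \<Rightarrow> 'a) \<Rightarrow> bool" where
  "is_derivation D \<longleftrightarrow> (\<forall>a b. D (a + b) = D a + D b) \<and> (\<forall>a b. D (a * b) = a * D b + D a * b)"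

text \<open>
Functions of the form c(n,t,lambda) (1+lambda)^n e^{+-xi(t,lambda)} with c a formal
Laurent series in lambda^{-1} are represented by int => 'a fls, where the fls variable
X stands for lambda^{-1}; the value at n is c(n) (1+lambda)^n (so the shift Gamma acts
ordinarily), while the factor e^{c xi} (charge c in {1,0,-1}) is left implicit and
is accounted for in the time derivatives (see tder).
\<close>

definition qinv :: "('a::comm_ring_1) fls" where
  "qinv = Abs_fls (\<lambda>j. if 1 \<le> j then (-1) ^ nat (j - 1) else 0)"
  \<comment> \<open>(1+lambda)^(-1) = sum_{j>=1} (-1)^(j-1) lambda^(-j)\<close>

definition qpow :: "int \<Rightarrow> ('a::comm_ring_1) fls" where
  "qpow n = (if 0 \<le> n then (1 + fls_X_inv) ^ nat n else qinv ^ nat (- n))"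

definition fls_cmap :: "('a::zero \<Rightarrow> 'a) \<Rightarrow> 'a fls \<Rightarrow> 'a fls" where
  "fls_cmap h f = Abs_fls (\<lambda>m. h (fls_nth f m))"

text \<open>Symbol sum_j P_j(n) lambda^j of P (= P applied to (1+lambda)^n, divided by it).\<close>
definition pdo_sym :: "('a::zero) pdo \<Rightarrow> int \<Rightarrow> 'a fls" where
  "pdo_sym P n = Abs_fls (\<lambda>m. P (- m) n)"

text \<open>Wave function w(n,t,lambda) = Z(n) (1+lambda)^n e^{xi}.\<close>
definition wave :: "('a::comm_ring_1) pdo \<Rightarrow> int \<Rightarrow> 'a fls" where
  "wave Z n = pdo_sym Z n * qpow n"

text \<open>P^* (1+lambda)^{-n} for P = sum_j p_j Delta^j, P^* = sum_j (Delta^*)^j p_j, using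
  (Delta^*)^j o g = sum_i binom(j,i) ((Delta^*)^i g)(n-j+i) (Delta^*)^(j-i) and
  (Delta^*)^k (1+lambda)^{-n} = lambda^k (1+lambda)^{-n}.\<close>
definition adj_exp_apply :: "('a::comm_ring_1) pdo \<Rightarrow> int \<Rightarrow> 'a fls" where
  "adj_exp_apply P n = Abs_fls (\<lambda>m. fsum (\<lambda>(j::int, i::nat).
       if int i - j = m then of_int (ibinom j i) * fdiffs i (P j) (n - j + int i) else 0))
     * qpow (- n)"

text \<open>Adjoint wave function w^*(n,t,lambda) = (Z^{-1}(n-1) Delta^{-1})^* (1+lambda)^{-n} e^{-xi}.\<close>
definition wave_adj :: "('a::comm_ring_1) pdo \<Rightarrow> int \<Rightarrow> 'a fls" where
  "wave_adj Zi = adj_exp_apply (\<lambda>j. shf (-1) (Zi (j + 1)))"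

text \<open>Time derivative d/dt_k of a function of charge c (implicit factor e^{c xi}).\<close>
definition tder :: "(nat \<Rightarrow> 'a \<Rightarrow> 'a) \<Rightarrow> int \<Rightarrow> nat \<Rightarrow> ('a::comm_ring_1) fls fn \<Rightarrow> 'a fls fn" where
  "tder dt c k f = (\<lambda>n. fls_cmap (dt k) (f n) + of_int c * fls_X_intpow (- int k) * f n)"

definition is_eigenfunction :: "(nat \<Rightarrow> 'a \<Rightarrow> 'a) \<Rightarrow> ('a::comm_ring_1) pdo \<Rightarrow> 'a fn \<Rightarrow> bool" where
  "is_eigenfunction dt L phi \<longleftrightarrow>
     (\<forall>k\<ge>1. \<forall>n. dt k (phi n) = pdo_apply (pdo_pos (pdo_pow L k)) phi n)"

definition is_adj_eigenfunction :: "(nat \<Rightarrow> 'a \<Rightarrow> 'a) \<Rightarrow> ('a::comm_ring_1) pdo \<Rightarrow> 'a fn \<Rightarrow> bool" where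
  "is_adj_eigenfunction dt L psi \<longleftrightarrow>
     (\<forall>k\<ge>1. \<forall>n. dt k (psi n) = - adj_conj_apply (pdo_pos (pdo_pow L k)) psi n)"

text \<open>S is the squared eigenfunction potential S(F, G) (G playing the role of Delta psi),
  S having charge c: Delta S = F G and
  d/dt_k S = res_Delta(Gamma Delta^{-1} G (L^k)_{>=1} F Delta^{-1}).\<close>
definition is_sep :: "(nat \<Rightarrow> 'a \<Rightarrow> 'a) \<Rightarrow> int \<Rightarrow> ('a::comm_ring_1) pdo
    \<Rightarrow> 'a fls fn \<Rightarrow> 'a fls fn \<Rightarrow> 'a fls fn \<Rightarrow> bool" where
  "is_sep dt c L F G S \<longleftrightarrow>
     (\<forall>n. fdiff 1 S n = F n * G n) \<and>
     (\<forall>k\<ge>1. tder dt c k S =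
        pdo_res (pdo_mult pdo_Gamma (pdo_mult pdo_Dinv (pdo_mult (pdo_fn G)
          (pdo_mult (pdo_pos (pdo_pow (pdo_map fls_const L) k)) (pdo_mult (pdo_fn F) pdo_Dinv))))))"

end

theory Submission
  imports Defs "HOL-Library.Groups_Big_Fun"
begin

notation fls_nth (infixl \<open>$$\<close> 75)

text \<open>
  With \<open>w = Z (1 + \<lambda>)\<^sup>n\<close>, the flow gives
  \<open>\<partial>\<^sub>\<alpha> w = \<Sum>\<^sub>i \<phi>\<^sub>i V\<^sub>i\<close> for \<open>V\<^sub>i = (\<Delta>\<^sup>-\<^sup>1 (\<Gamma>\<psi>\<^sub>i) \<Delta> Z) (1 + \<lambda>)\<^sup>n\<close>, and \<open>\<Delta>V\<^sub>i = (\<Gamma>\<psi>\<^sub>i) \<Delta>w\<close>.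
  Hence \<open>\<psi>\<^sub>i w - V\<^sub>i\<close> has the same difference in \<open>n\<close> as the potential \<open>S(w, \<Delta>\<psi>\<^sub>i)\<close>, so the
  two differ by something independent of \<open>n\<close>. The \<open>t\<^sub>1\<close>-equation of the potential bounds its
  order in \<open>\<lambda>\<^sup>-\<^sup>1\<close> from below by \<open>c - n\<close> for every \<open>n\<close>, so that difference vanishes.
  For \<open>w\<^sup>*\<close>, the identity \<open>\<partial>\<^sub>\<alpha>Z\<^sup>-\<^sup>1 = -Z\<^sup>-\<^sup>1 (\<partial>\<^sub>\<alpha>Z) Z\<^sup>-\<^sup>1\<close> and the commutation rule
  \<open>(P\<psi>)\<^sup>* (1 + \<lambda>)\<^sup>-\<^sup>n = \<psi>(n) P\<^sup>* (1 + \<lambda>)\<^sup>-\<^sup>n\<close> reduce the claim to the same argument,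
  now with bounds \<open>n + c\<close>.
\<close>

section \<open>Finitely supported sums\<close>

definition finite_support :: "('b \<Rightarrow> 'r::zero) \<Rightarrow> bool" where
  "finite_support f \<longleftrightarrow> finite {x. f x \<noteq> 0}"

lemma fsum_eq_Sum_any: "fsum = Sum_any"
  by (simp add: fun_eq_iff fsum_def Sum_any.expand_set)

lemma finite_supportI:
  "finite S \<Longrightarrow> (\<And>x. f x \<noteq> 0 \<Longrightarrow> x \<in> S) \<Longrightarrow> finite_support f"
  unfolding finite_support_def by (rule finite_subset[of _ S]) auto

lemma fsum_eq_sum:
  assumes "finite S" "\<And>x. f x \<noteq> 0 \<Longrightarrow> x \<in> S"
  shows "fsum f = sum f S"
  unfolding fsum_eq_Sum_any by (rule Sum_any.expand_superset) (use assms in auto)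

lemma fsum_zero[simp]: "fsum (\<lambda>x. 0) = 0"
  by (simp add: fsum_def)

lemma fsum_cong: assumes "\<And>x. f x = g x" shows "fsum f = fsum g"
  using assms by (metis ext)

lemma fsum_single_support: "(\<And>x. x \<noteq> a \<Longrightarrow> f x = 0) \<Longrightarrow> fsum f = f a"
  by (subst fsum_eq_sum[of "{a}"]) auto

lemma fsum_add:
  "finite_support f \<Longrightarrow> finite_support g \<Longrightarrow> fsum (\<lambda>x. f x + g x) = fsum f + fsum g"
  unfolding fsum_eq_Sum_any finite_support_def by (rule Sum_any.distrib)

lemma fsum_neg: "fsum (\<lambda>x. - f x) = - fsum (f :: 'b \<Rightarrow> 'r::ab_group_add)"
  by (simp add: fsum_def sum_negf)

lemma finite_support_add:
  "finite_support f \<Longrightarrow> finite_support g \<Longrightarrow> finite_support (\<lambda>x. f x + (g x::'r::monoid_add))"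
  unfolding finite_support_def by (rule finite_subset[of _ "{x. f x \<noteq> 0} \<union> {x. g x \<noteq> 0}"]) auto

lemma finite_support_diff:
  "finite_support f \<Longrightarrow> finite_support g \<Longrightarrow> finite_support (\<lambda>x. f x - (g x::'r::group_add))"
  unfolding finite_support_def by (rule finite_subset[of _ "{x. f x \<noteq> 0} \<union> {x. g x \<noteq> 0}"]) auto

lemma finite_support_neg: "finite_support f \<Longrightarrow> finite_support (\<lambda>x. - (f x::'r::group_add))"
  unfolding finite_support_def by simp

lemma fsum_diff:
  fixes f g :: "'b \<Rightarrow> 'r::ab_group_add"
  assumes "finite_support f" "finite_support g"
  shows "fsum (\<lambda>x. f x - g x) = fsum f - fsum g"
  using fsum_add[OF assms(1) finite_support_neg[OF assms(2)]] by (simp add: fsum_neg)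

lemma fsum_const_mult:
  "finite_support f \<Longrightarrow> fsum (\<lambda>x. c * f x) = c * fsum (f :: 'b \<Rightarrow> 'r::semiring_0)"
  unfolding fsum_eq_Sum_any finite_support_def by (rule Sum_any_right_distrib[symmetric])

lemma fsum_mult_const:
  "finite_support f \<Longrightarrow> fsum (\<lambda>x. f x * c) = fsum (f :: 'b \<Rightarrow> 'r::semiring_0) * c"
  unfolding fsum_eq_Sum_any finite_support_def by (rule Sum_any_left_distrib[symmetric])

lemma fsum_shift_int: "fsum (\<lambda>s::int. f (s + c)) = fsum f"
  unfolding fsum_eq_Sum_any
  by (rule Sum_any.reindex_cong[of "\<lambda>s. s + c", symmetric])
     (auto simp: bij_def inj_def surj_def intro: exI[of _ "_ - c"])

lemma fsum_nat_Suc_shift: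
  fixes f :: "nat \<Rightarrow> 'r::comm_monoid_add"
  assumes "finite_support f"
  shows "fsum f = f 0 + fsum (\<lambda>i. f (Suc i))"
proof -
  obtain N where N: "\<And>x. f x \<noteq> 0 \<Longrightarrow> x \<le> N"
    using assms by (auto simp: finite_support_def finite_nat_set_iff_bounded_le)
  have "fsum f = sum f {..Suc N}" by (rule fsum_eq_sum) (auto dest: N)
  also have "\<dots> = f 0 + sum (\<lambda>i. f (Suc i)) {..N}" by (rule sum.atMost_Suc_shift)
  also have "sum (\<lambda>i. f (Suc i)) {..N} = fsum (\<lambda>i. f (Suc i))"
    by (rule fsum_eq_sum[symmetric]) (auto dest: N)
  finally show ?thesis .
qed

lemma finite_support_prod:
  assumes "finite A" "finite B" "\<And>x y. F x y \<noteq> 0 \<Longrightarrow> x \<in> A \<and> y \<in> B"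
  shows "finite_support (\<lambda>(x,y). F x y)"
  by (rule finite_supportI[of "A \<times> B"]) (use assms in auto)

lemma finite_support_prod_box:
  assumes "finite_support (\<lambda>(x,y). F x y)"
  shows "finite ({x. \<exists>y. F x y \<noteq> 0} \<times> {y. \<exists>x. F x y \<noteq> 0})"
proof -
  let ?P = "{(x,y). F x y \<noteq> 0}"
  have "finite ?P" using assms by (simp add: finite_support_def case_prod_unfold)
  moreover have "{x. \<exists>y. F x y \<noteq> 0} = fst ` ?P" "{y. \<exists>x. F x y \<noteq> 0} = snd ` ?P"
    by force+
  ultimately show ?thesis by simp
qed

lemma fsum_prod:
  assumes "finite_support (\<lambda>(x,y). F x y)"
  shows "fsum (\<lambda>(x,y). F x y) = fsum (\<lambda>x. fsum (\<lambda>y. F x y))"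
  unfolding fsum_eq_Sum_any
  by (rule Sum_any.cartesian_product[OF finite_support_prod_box[OF assms] order_refl, symmetric])

lemma fsum_swap:
  assumes "finite_support (\<lambda>(x,y). F x y)"
  shows "fsum (\<lambda>x. fsum (\<lambda>y. F x y)) = fsum (\<lambda>y. fsum (\<lambda>x. F x y))"
  unfolding fsum_eq_Sum_any by (rule Sum_any.swap[OF finite_support_prod_box[OF assms] order_refl])

lemma of_int_ibinom: "(of_int (ibinom k i) :: rat) = (of_int k) gchoose i"
proof (cases "0 \<le> k")
  case True
  then have k: "(of_int k :: rat) = of_nat (nat k)" by simp
  show ?thesis using True unfolding ibinom_def k by (simp add: binomial_gbinomial)
next
  case False
  have "(of_int k :: rat) gchoose i = (-1)^i * ((of_nat i - of_int k - 1) gchoose i)"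
    by (rule gbinomial_negated_upper)
  also have "(of_nat i - of_int k - 1 :: rat) = of_nat (nat (- k) + i - 1)"
    using False by (simp add: of_nat_diff)
  finally show ?thesis using False by (simp add: ibinom_def binomial_gbinomial)
qed

lemma ibinom_Pascal: "ibinom (k + 1) (Suc i) = ibinom k (Suc i) + ibinom k i"
proof -
  have "(of_int (ibinom (k + 1) (Suc i)) :: rat) = of_int (ibinom k (Suc i) + ibinom k i)"
    unfolding of_int_add of_int_ibinom by (simp add: gbinomial_Suc_Suc)
  then show ?thesis by (simp only: of_int_eq_iff)
qed

lemma ibinom_0_right[simp]: "ibinom k 0 = 1"
  by (simp add: ibinom_def)

lemma ibinom_0_left: "ibinom 0 i = (if i = 0 then 1 else 0)"
  by (simp add: ibinom_def)

lemma ibinom_1_left: "ibinom 1 i = (if i \<le> 1 then 1 else 0)"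
  by (cases i) (auto simp: ibinom_def)

lemma fdiff_zero_fun: "fdiff i (\<lambda>n. 0) = (\<lambda>n. 0)"
  by (induction i) auto

lemma fdiff_const: "fdiff i (\<lambda>n. c) = (\<lambda>n. if i = 0 then c else 0)"
  by (induction i) auto

lemma fdiff_shift: "fdiff i (\<lambda>n. f (n + c)) p = fdiff i f (p + c)"
  by (induction i arbitrary: p) (auto simp: algebra_simps)

lemma fdiff_add: "fdiff i (\<lambda>n. f n + g n) p = fdiff i f p + fdiff i g p"
  by (induction i arbitrary: p) (auto simp: algebra_simps)

lemma fdiffs_add: "fdiffs i (\<lambda>n. f n + g n) p = fdiffs i f p + fdiffs i g p"
  by (induction i arbitrary: p) (auto simp: algebra_simps)

lemma fdiffs_neg: "fdiffs i (\<lambda>n. - f n) p = - fdiffs i f p"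
  by (induction i arbitrary: p) (auto simp: algebra_simps)

lemma fdiffs_zero_fun: "fdiffs i (\<lambda>n. 0) = (\<lambda>n. 0)"
  by (induction i) auto

locale derivation =
  fixes D :: "'a::comm_ring_1 \<Rightarrow> 'a"
  assumes der: "is_derivation D"
begin

lemma add: "D (a + b) = D a + D b"
  using der by (simp add: is_derivation_def)

lemma mult: "D (a * b) = a * D b + D a * b"
  using der by (simp add: is_derivation_def)

lemma zero[simp]: "D 0 = 0"
  using add[of 0 0] by simp

lemma neg: "D (- a) = - D a"
proof -
  have "D a + D (- a) = 0" using add[of a "- a"] by simp
  then show ?thesis by (metis add.commute eq_neg_iff_add_eq_0)
qed

lemma diff: "D (a - b) = D a - D b"
  using add[of a "- b"] neg[of b] by simp

lemma one[simp]: "D 1 = 0"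
  using mult[of 1 1] by simp

lemma of_nat[simp]: "D (of_nat k) = 0"
  by (induction k) (simp_all add: add)

lemma of_int[simp]: "D (of_int k) = 0"
  by (cases k rule: int_cases) (simp_all add: neg diff)

lemma of_int_mult: "D (of_int k * a) = of_int k * D a"
  by (simp add: mult)

lemma sum: "D (\<Sum>x\<in>I. f x) = (\<Sum>x\<in>I. D (f x))"
  by (induction I rule: infinite_finite_induct) (simp_all add: add)

lemma fsum: "finite_support f \<Longrightarrow> D (fsum f) = fsum (\<lambda>x. D (f x))"
  unfolding finite_support_def fsum_def sum
  by (rule fsum_eq_sum[unfolded fsum_def, symmetric]) auto

lemma fdiff: "D (fdiff i f p) = fdiff i (\<lambda>n. D (f n)) p"
  by (induction i arbitrary: p) (simp_all add: diff)

lemma fdiffs: "D (fdiffs i f p) = fdiffs i (\<lambda>n. D (f n)) p"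
  by (induction i arbitrary: p) (simp_all add: diff)

end

section \<open>Pseudo-difference operators\<close>

definition pdo_order_le :: "('r::zero) pdo \<Rightarrow> int \<Rightarrow> bool" where
  "pdo_order_le A b \<longleftrightarrow> (\<forall>j>b. \<forall>n. A j n = 0)"

definition pdo_Dpow :: "int \<Rightarrow> ('r::{zero,one}) pdo" where
  "pdo_Dpow k = (\<lambda>j n. if j = k then 1 else 0)"

lemma pdo_one_eq_Dpow: "pdo_one = pdo_Dpow 0" by (simp add: pdo_one_def pdo_Dpow_def)

lemma pdo_Delta_eq_Dpow: "pdo_Delta = pdo_Dpow 1" by (simp add: pdo_Delta_def pdo_Dpow_def)

lemma pdo_Dinv_eq_Dpow: "pdo_Dinv = pdo_Dpow (-1)" by (simp add: pdo_Dinv_def pdo_Dpow_def)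

lemma pdo_one_fn: "pdo_one = pdo_fn (\<lambda>n. 1)" by (simp add: pdo_one_def pdo_fn_def)

lemma pdo_order_le_Dpow: "pdo_order_le (pdo_Dpow k) k" by (simp add: pdo_order_le_def pdo_Dpow_def)

lemma pdo_order_le_fn: "pdo_order_le (pdo_fn g) 0" by (simp add: pdo_order_le_def pdo_fn_def)

lemma pdo_order_le_mono: "pdo_order_le A a \<Longrightarrow> a \<le> b \<Longrightarrow> pdo_order_le A b"
  by (simp add: pdo_order_le_def)

lemma pdo_order_leD: "pdo_order_le A b \<Longrightarrow> b < j \<Longrightarrow> A j n = 0"
  by (simp add: pdo_order_le_def)

lemma pdo_order_le_coeff_eq_0: "pdo_order_le A b \<Longrightarrow> b < j \<Longrightarrow> A j = (\<lambda>n. 0)"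
  by (auto simp: pdo_order_le_def)

lemma pdo_wf_iff_order_le: "pdo_wf A \<longleftrightarrow> (\<exists>b. pdo_order_le A b)"
  by (simp add: pdo_wf_def pdo_order_le_def)

lemma pdo_order_le_add:
  "pdo_order_le A a \<Longrightarrow> pdo_order_le B a \<Longrightarrow> pdo_order_le (\<lambda>j n. A j n + B j n :: 'r::monoid_add) a"
  by (simp add: pdo_order_le_def)

lemma pdo_order_le_neg: "pdo_order_le A a \<Longrightarrow> pdo_order_le (\<lambda>j n. - A j n :: 'r::group_add) a"
  by (simp add: pdo_order_le_def)

lemma pdo_order_le_sum:
  "(\<And>i. i \<in> I \<Longrightarrow> pdo_order_le (A i) a) \<Longrightarrow> pdo_order_le (\<lambda>j n. \<Sum>i\<in>I. A i j n :: 'r::comm_monoid_add) a"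
  by (simp add: pdo_order_le_def)

lemma pdo_order_le_map: "pdo_order_le A a \<Longrightarrow> h 0 = 0 \<Longrightarrow> pdo_order_le (pdo_map h A) a"
  by (simp add: pdo_order_le_def pdo_map_def)

text \<open>The coefficient of \<open>\<Delta>\<^sup>r\<close> in \<open>\<Delta>\<^sup>k \<circ> B\<close>.\<close>

definition Dpow_mult_coeff :: "int \<Rightarrow> ('r::comm_ring_1) pdo \<Rightarrow> int \<Rightarrow> int \<Rightarrow> 'r" where
  "Dpow_mult_coeff k B r n =
    fsum (\<lambda>i::nat. of_int (ibinom k i) * fdiff i (B (r - k + int i)) (n + k - int i))"

lemma finite_support_Dpow_mult_terms:
  assumes "pdo_order_le B b"
  shows "finite_support (\<lambda>i::nat. of_int (ibinom k i) * fdiff i (B (r - k + int i)) (n + k - int i))"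
proof (rule finite_supportI[of "{..nat (b - r + k)}"])
  fix i assume "of_int (ibinom k i) * fdiff i (B (r - k + int i)) (n + k - int i) \<noteq> 0"
  then have "fdiff i (B (r - k + int i)) (n + k - int i) \<noteq> 0" by auto
  then have "\<not> b < r - k + int i" using pdo_order_le_coeff_eq_0[OF assms] fdiff_zero_fun by metis
  then show "i \<in> {..nat (b - r + k)}" by auto
qed simp

lemma Dpow_mult_coeff_eq_0:
  assumes "pdo_order_le B b" "k < r - b"
  shows "Dpow_mult_coeff k B r n = 0"
proof -
  have "fdiff i (B (r - k + int i)) (n + k - int i) = 0" for i :: nat
  proof -
    have "B (r - k + int i) = (\<lambda>n. 0)" using assms by (intro pdo_order_le_coeff_eq_0) auto
    then show ?thesis by (simp add: fdiff_zero_fun)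
  qed
  then show ?thesis by (simp add: Dpow_mult_coeff_def)
qed

lemma finite_support_order_le_mult:
  fixes A :: "('r::comm_ring_1) pdo"
  assumes "pdo_order_le A a" "\<And>s. s < L \<Longrightarrow> h s = 0"
  shows "finite_support (\<lambda>s. A s p * h s)"
proof (rule finite_supportI[of "{L..a}"])
  fix s assume "A s p * h s \<noteq> 0"
  then show "s \<in> {L..a}"
    using assms pdo_order_leD[OF assms(1)] by (cases "s < L"; cases "a < s") auto
qed simp

lemma pdo_mult_eq_fsum_Dpow_mult:
  fixes A B :: "('r::comm_ring_1) pdo"
  assumes A: "pdo_order_le A a" and B: "pdo_order_le B b"
  shows "pdo_mult A B r n = fsum (\<lambda>k. A k n * Dpow_mult_coeff k B r n)"
proof -
  let ?F = "\<lambda>k (i::nat). A k n * of_int (ibinom k i) * fdiff i (B (r - k + int i)) (n + k - int i)"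
  have fin2: "finite_support (\<lambda>(k,i). ?F k i)"
  proof (rule finite_support_prod[of "{r - b..a}" "{..nat (b - r + a)}"])
    fix k i assume h: "?F k i \<noteq> 0"
    then have "A k n \<noteq> 0" by auto
    then have ka: "k \<le> a" using pdo_order_leD[OF A] by force
    from h have "fdiff i (B (r - k + int i)) (n + k - int i) \<noteq> 0" by auto
    then have "\<not> b < r - k + int i" using pdo_order_le_coeff_eq_0[OF B] fdiff_zero_fun by metis
    then show "k \<in> {r - b..a} \<and> i \<in> {..nat (b - r + a)}" using ka by auto
  qed auto
  have "pdo_mult A B r n = fsum (\<lambda>(k,i). ?F k i)"
    by (simp add: pdo_mult_def)
  also have "\<dots> = fsum (\<lambda>k. fsum (\<lambda>i. ?F k i))" by (rule fsum_prod[OF fin2])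
  also have "\<dots> = fsum (\<lambda>k. A k n * Dpow_mult_coeff k B r n)"
  proof (rule fsum_cong)
    fix k
    show "fsum (\<lambda>i. ?F k i) = A k n * Dpow_mult_coeff k B r n"
      unfolding Dpow_mult_coeff_def fsum_const_mult[OF finite_support_Dpow_mult_terms[OF B], symmetric]
      by (simp add: mult.assoc)
  qed
  finally show ?thesis .
qed

lemma finite_support_pdo_mult_terms:
  assumes "pdo_order_le A a" "pdo_order_le B b"
  shows "finite_support (\<lambda>k. A k n * Dpow_mult_coeff k B r n)"
  by (rule finite_support_order_le_mult[OF assms(1)]) (use Dpow_mult_coeff_eq_0[OF assms(2)] in auto)

lemma pdo_order_le_mult:
  assumes "pdo_order_le A a" "pdo_order_le B b"
  shows "pdo_order_le (pdo_mult A B) (a + b)"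
  unfolding pdo_order_le_def
proof (intro allI impI)
  fix r n assume r: "a + b < r"
  have "A k n * Dpow_mult_coeff k B r n = 0" for k
  proof (cases "a < k")
    case True then show ?thesis using pdo_order_leD[OF assms(1)] by simp
  next
    case False then show ?thesis using Dpow_mult_coeff_eq_0[OF assms(2), of k r] r by simp
  qed
  then show "pdo_mult A B r n = 0" by (simp add: pdo_mult_eq_fsum_Dpow_mult[OF assms])
qed

lemma pdo_wf_mult[simp]: "pdo_wf A \<Longrightarrow> pdo_wf B \<Longrightarrow> pdo_wf (pdo_mult A B)"
  unfolding pdo_wf_iff_order_le using pdo_order_le_mult by blast

lemma pdo_mult_Dpow_left:
  assumes "pdo_order_le B b"
  shows "pdo_mult (pdo_Dpow k) B r n = Dpow_mult_coeff k B r n"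
proof -
  have "pdo_mult (pdo_Dpow k) B r n = fsum (\<lambda>k'. pdo_Dpow k k' n * Dpow_mult_coeff k' B r n)"
    by (rule pdo_mult_eq_fsum_Dpow_mult[OF pdo_order_le_Dpow assms])
  also have "\<dots> = pdo_Dpow k k n * Dpow_mult_coeff k B r n"
    by (rule fsum_single_support) (simp add: pdo_Dpow_def)
  finally show ?thesis by (simp add: pdo_Dpow_def)
qed

lemma pdo_mult_Delta_left: "pdo_mult pdo_Delta X r n = X (r - 1) (n + 1) + (X r (n + 1) - X r n)"
proof -
  let ?F = "\<lambda>(k::int, i::nat).
    pdo_Delta k n * of_int (ibinom k i) * fdiff i (X (r - k + int i)) (n + k - int i)"
  have "fsum ?F = sum ?F {(1,0), (1,1)}"
  proof (rule fsum_eq_sum)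
    fix p assume "?F p \<noteq> 0"
    then show "p \<in> {(1,0),(1,1)}"
      by (cases p) (auto simp: pdo_Delta_def ibinom_1_left split: if_splits)
  qed simp
  then show ?thesis by (simp add: pdo_mult_def pdo_Delta_def ibinom_1_left)
qed

lemma pdo_mult_Dpow_right: "pdo_mult X (pdo_Dpow k) r n = X (r - k) n"
proof -
  let ?F = "\<lambda>(k'::int, i::nat).
    X k' n * of_int (ibinom k' i) * fdiff i (pdo_Dpow k (r - k' + int i)) (n + k' - int i)"
  have e: "pdo_Dpow k j = (\<lambda>n. if j = k then 1 else 0)" for j by (simp add: pdo_Dpow_def)
  have "fsum ?F = sum ?F {(r - k, 0)}"
  proof (rule fsum_eq_sum)
    fix p assume "?F p \<noteq> 0"
    then show "p \<in> {(r - k, 0)}"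
      by (cases p) (auto simp: e fdiff_const split: if_splits)
  qed simp
  then show ?thesis by (simp add: pdo_mult_def e)
qed

lemma pdo_mult_fn_left: "pdo_mult (pdo_fn g) X r n = g n * X r n"
proof -
  let ?F = "\<lambda>(k::int, i::nat).
    pdo_fn g k n * of_int (ibinom k i) * fdiff i (X (r - k + int i)) (n + k - int i)"
  have "fsum ?F = sum ?F {(0, 0)}"
  proof (rule fsum_eq_sum)
    fix p assume "?F p \<noteq> 0"
    then show "p \<in> {(0, 0)}"
      by (cases p) (auto simp: pdo_fn_def ibinom_0_left split: if_splits)
  qed simp
  then show ?thesis by (simp add: pdo_mult_def pdo_fn_def)
qed

lemma pdo_Dpow_mult_Dpow: "pdo_mult (pdo_Dpow k) (pdo_Dpow j) = pdo_Dpow (k + j)"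
  by (intro ext) (simp only: pdo_mult_Dpow_right, auto simp: pdo_Dpow_def)

lemma pdo_mult_one_left: "pdo_mult pdo_one X = X"
  by (intro ext) (simp add: pdo_one_fn pdo_mult_fn_left)

lemma pdo_mult_one_right: "pdo_mult X pdo_one = X"
  by (intro ext) (simp add: pdo_one_eq_Dpow pdo_mult_Dpow_right)

lemma pdo_mult_Dpow0_left: "pdo_mult (pdo_Dpow 0) X = X"
  using pdo_mult_one_left by (simp add: pdo_one_eq_Dpow)

lemma pdo_mult_Delta_left_inj:
  assumes X: "pdo_order_le X x" and Y: "pdo_order_le Y y"
    and eq: "pdo_mult pdo_Delta X = pdo_mult pdo_Delta Y"
  shows "X = Y"
proof -
  define D where "D j n = X j n - Y j n" for j n
  have rec: "D (r - 1) (n + 1) = D r n - D r (n + 1)" for r n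
    using fun_cong[OF fun_cong[OF eq, of r], of n]
    by (simp add: pdo_mult_Delta_left D_def algebra_simps)
  have "D r = (\<lambda>n. 0)" if "r \<le> max x y + 1" for r
    using that
  proof (induction r rule: int_le_induct)
    case base
    then show ?case using pdo_order_leD[OF X] pdo_order_leD[OF Y] by (auto simp: D_def)
  next
    case (step i)
    then show ?case using rec[of i "n - 1" for n] by (simp add: fun_eq_iff)
  qed
  moreover have "D r = (\<lambda>n. 0)" if "max x y + 1 < r" for r
    using that pdo_order_leD[OF X] pdo_order_leD[OF Y] by (auto simp: D_def)
  ultimately have "D r n = 0" for r n by (cases "r \<le> max x y + 1") auto
  then show ?thesis by (intro ext) (simp add: D_def)
qed

lemma finite_support_int_interval:
  "(\<And>s::int. f s \<noteq> 0 \<Longrightarrow> L \<le> s \<and> s \<le> U) \<Longrightarrow> finite_support f"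
  by (rule finite_supportI[of "{L..U}"]) auto

lemma finite_support_nat_bounded: "(\<And>i::nat. N < i \<Longrightarrow> f i = 0) \<Longrightarrow> finite_support f"
  by (rule finite_supportI[of "{..N}"]) (auto simp: not_le[symmetric])

lemma Dpow_mult_coeff_Suc:
  fixes C :: "('r::comm_ring_1) pdo"
  assumes C: "pdo_order_le C c"
  shows "Dpow_mult_coeff (s + 1) C r n + Dpow_mult_coeff s C r n =
    Dpow_mult_coeff s C (r - 1) (n + 1) + Dpow_mult_coeff s C r (n + 1)"
proof -
  let ?b = "\<lambda>k i. of_int (ibinom k i) :: 'r"
  define G where "G i = fdiff i (C (r - s - 1 + int i)) (n + s + 1 - int i)" for i
  have G: "G i = 0" if "nat (c - r + s + 1) < i" for i
    using that pdo_order_le_coeff_eq_0[OF C, of "r - s - 1 + int i"] by (simp add: G_def fdiff_zero_fun)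
  have fin: "finite_support (\<lambda>i. f i * G i)" "finite_support (\<lambda>i. f i * G (Suc i))" for f
    by (auto intro!: finite_support_nat_bounded[of "nat (c - r + s + 1)"] simp: G)
  have "Dpow_mult_coeff (s + 1) C r n = fsum (\<lambda>i. ?b (s + 1) i * G i)"
    unfolding Dpow_mult_coeff_def G_def by (rule fsum_cong) (simp add: algebra_simps)
  also have "\<dots> = G 0 + fsum (\<lambda>i. ?b s (Suc i) * G (Suc i)) + fsum (\<lambda>i. ?b s i * G (Suc i))"
    by (simp add: fsum_nat_Suc_shift[OF fin(1)] ibinom_Pascal distrib_right fsum_add fin add.assoc)
  finally have lhs: "Dpow_mult_coeff (s + 1) C r n =
    G 0 + fsum (\<lambda>i. ?b s (Suc i) * G (Suc i)) + fsum (\<lambda>i. ?b s i * G (Suc i))" .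
  have "Dpow_mult_coeff s C (r - 1) (n + 1) = fsum (\<lambda>i. ?b s i * G i)"
    unfolding Dpow_mult_coeff_def G_def by (rule fsum_cong) (simp add: algebra_simps)
  also have "\<dots> = G 0 + fsum (\<lambda>i. ?b s (Suc i) * G (Suc i))"
    by (simp add: fsum_nat_Suc_shift[OF fin(1)])
  finally have rhs1: "Dpow_mult_coeff s C (r - 1) (n + 1) = G 0 + fsum (\<lambda>i. ?b s (Suc i) * G (Suc i))" .
  have "Dpow_mult_coeff s C r (n + 1) - Dpow_mult_coeff s C r n =
      fsum (\<lambda>i. ?b s i * fdiff i (C (r - s + int i)) (n + 1 + s - int i)
        - ?b s i * fdiff i (C (r - s + int i)) (n + s - int i))"
    unfolding Dpow_mult_coeff_def
    by (rule fsum_diff[symmetric]) (rule finite_support_Dpow_mult_terms[OF C])+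
  also have "\<dots> = fsum (\<lambda>i. ?b s i * G (Suc i))"
    by (rule fsum_cong) (simp add: G_def algebra_simps)
  finally show ?thesis
    using lhs rhs1 by (simp add: algebra_simps)
qed

text \<open>Associativity is proved first for a left factor \<open>\<Delta>\<close>, where it comes down to Pascal's
  rule, then for \<open>\<Delta>\<^sup>k\<close> by induction on \<open>k\<close> in both directions (left multiplication by
  \<open>\<Delta>\<close> being injective), and in general by expanding the left factor in powers of \<open>\<Delta>\<close>.\<close>

lemma pdo_mult_Delta_assoc:
  fixes B C :: "('r::comm_ring_1) pdo"
  assumes B: "pdo_order_le B b" and C: "pdo_order_le C c"
  shows "pdo_mult (pdo_mult pdo_Delta B) C = pdo_mult pdo_Delta (pdo_mult B C)"
proof (intro ext)
  fix r n
  let ?c = "\<lambda>s r n. Dpow_mult_coeff s C r n"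
  have DB: "pdo_order_le (pdo_mult pdo_Delta B) (1 + b)"
    unfolding pdo_Delta_eq_Dpow by (rule pdo_order_le_mult[OF pdo_order_le_Dpow B])
  have fa: "finite_support (\<lambda>s. B s p * ?c s r' m)" for p r' m
    by (rule finite_support_order_le_mult[OF B]) (use Dpow_mult_coeff_eq_0[OF C] in auto)
  have fb: "finite_support (\<lambda>s. B (s - 1) (n + 1) * ?c s r n)"
  proof (rule finite_support_int_interval[of _ "r - c" "b + 1"])
    fix s assume h: "B (s - 1) (n + 1) * ?c s r n \<noteq> 0"
    then have "\<not> b < s - 1" using pdo_order_leD[OF B] by force
    moreover have "\<not> s < r - c" using h Dpow_mult_coeff_eq_0[OF C] by force
    ultimately show "r - c \<le> s \<and> s \<le> b + 1" by simp
  qed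
  have fc: "finite_support (\<lambda>s. B s (n + 1) * ?c (s + 1) r n)"
    by (rule finite_support_order_le_mult[OF B, of "r - c - 1"]) (use Dpow_mult_coeff_eq_0[OF C] in auto)
  have "pdo_mult (pdo_mult pdo_Delta B) C r n =
      fsum (\<lambda>s. B (s - 1) (n + 1) * ?c s r n + (B s (n + 1) * ?c s r n - B s n * ?c s r n))"
    by (simp add: pdo_mult_eq_fsum_Dpow_mult[OF DB C] pdo_mult_Delta_left algebra_simps)
  also have "\<dots> = fsum (\<lambda>s. B (s - 1) (n + 1) * ?c s r n)
      + (fsum (\<lambda>s. B s (n + 1) * ?c s r n) - fsum (\<lambda>s. B s n * ?c s r n))"
    by (simp add: fsum_add fb finite_support_diff fa fsum_diff)
  also have "fsum (\<lambda>s. B (s - 1) (n + 1) * ?c s r n) = fsum (\<lambda>s. B s (n + 1) * ?c (s + 1) r n)"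
    using fsum_shift_int[of "\<lambda>s. B (s - 1) (n + 1) * ?c s r n" 1] by simp
  also have "fsum (\<lambda>s. B s (n + 1) * ?c (s + 1) r n)
      + (fsum (\<lambda>s. B s (n + 1) * ?c s r n) - fsum (\<lambda>s. B s n * ?c s r n))
      = fsum (\<lambda>s. B s (n + 1) * (?c (s + 1) r n + ?c s r n)) - fsum (\<lambda>s. B s n * ?c s r n)"
    by (simp add: distrib_left fsum_add fc fa)
  also have "\<dots> = fsum (\<lambda>s. B s (n + 1) * ?c s (r - 1) (n + 1))
      + (fsum (\<lambda>s. B s (n + 1) * ?c s r (n + 1)) - fsum (\<lambda>s. B s n * ?c s r n))"
    by (simp add: Dpow_mult_coeff_Suc[OF C] distrib_left fsum_add fa)
  also have "\<dots> = pdo_mult pdo_Delta (pdo_mult B C) r n"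
    by (simp add: pdo_mult_Delta_left pdo_mult_eq_fsum_Dpow_mult[OF B C])
  finally show "pdo_mult (pdo_mult pdo_Delta B) C r n = pdo_mult pdo_Delta (pdo_mult B C) r n" .
qed

lemma pdo_mult_Dpow_assoc:
  fixes B C :: "('r::comm_ring_1) pdo"
  assumes B: "pdo_order_le B b" and C: "pdo_order_le C c"
  shows "pdo_mult (pdo_mult (pdo_Dpow k) B) C = pdo_mult (pdo_Dpow k) (pdo_mult B C)"
proof (induction k rule: int_induct[where k = 0])
  case base
  show ?case by (simp add: pdo_mult_Dpow0_left)
next
  case (step1 k)
  have Dpow_Suc: "pdo_Dpow (k + 1) = pdo_mult pdo_Delta (pdo_Dpow k)"
    by (simp add: pdo_Delta_eq_Dpow pdo_Dpow_mult_Dpow add.commute)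
  have w1: "pdo_order_le (pdo_mult (pdo_Dpow k) B) (k + b)"
    by (rule pdo_order_le_mult[OF pdo_order_le_Dpow B])
  have w2: "pdo_order_le (pdo_mult B C) (b + c)" by (rule pdo_order_le_mult[OF B C])
  have "pdo_mult (pdo_mult (pdo_Dpow (k + 1)) B) C = pdo_mult (pdo_mult pdo_Delta (pdo_mult (pdo_Dpow k) B)) C"
    by (simp add: Dpow_Suc pdo_mult_Delta_assoc[OF pdo_order_le_Dpow B])
  also have "\<dots> = pdo_mult pdo_Delta (pdo_mult (pdo_mult (pdo_Dpow k) B) C)"
    by (rule pdo_mult_Delta_assoc[OF w1 C])
  also have "\<dots> = pdo_mult pdo_Delta (pdo_mult (pdo_Dpow k) (pdo_mult B C))"
    by (simp add: step1)
  also have "\<dots> = pdo_mult (pdo_mult pdo_Delta (pdo_Dpow k)) (pdo_mult B C)"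
    by (simp add: pdo_mult_Delta_assoc[OF pdo_order_le_Dpow w2])
  finally show ?case by (simp add: Dpow_Suc)
next
  case (step2 k)
  have Dpow_pred: "pdo_Dpow k = pdo_mult pdo_Delta (pdo_Dpow (k - 1))"
    by (simp add: pdo_Delta_eq_Dpow pdo_Dpow_mult_Dpow)
  have w1: "pdo_order_le (pdo_mult (pdo_Dpow (k - 1)) B) (k - 1 + b)"
    by (rule pdo_order_le_mult[OF pdo_order_le_Dpow B])
  have w2: "pdo_order_le (pdo_mult B C) (b + c)" by (rule pdo_order_le_mult[OF B C])
  have wX: "pdo_order_le (pdo_mult (pdo_mult (pdo_Dpow (k - 1)) B) C) (k - 1 + b + c)"
    by (rule pdo_order_le_mult[OF w1 C])
  have wY: "pdo_order_le (pdo_mult (pdo_Dpow (k - 1)) (pdo_mult B C)) (k - 1 + (b + c))"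
    by (rule pdo_order_le_mult[OF pdo_order_le_Dpow w2])
  have "pdo_mult pdo_Delta (pdo_mult (pdo_mult (pdo_Dpow (k - 1)) B) C) = pdo_mult (pdo_mult (pdo_Dpow k) B) C"
    by (simp add: Dpow_pred pdo_mult_Delta_assoc[OF pdo_order_le_Dpow B] pdo_mult_Delta_assoc[OF w1 C])
  also have "\<dots> = pdo_mult (pdo_Dpow k) (pdo_mult B C)" by (rule step2)
  also have "\<dots> = pdo_mult pdo_Delta (pdo_mult (pdo_Dpow (k - 1)) (pdo_mult B C))"
    by (simp add: Dpow_pred pdo_mult_Delta_assoc[OF pdo_order_le_Dpow w2])
  finally show ?case by (rule pdo_mult_Delta_left_inj[OF wX wY])
qed

theorem pdo_mult_assoc:
  fixes A B C :: "('r::comm_ring_1) pdo"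
  assumes A: "pdo_order_le A a" and B: "pdo_order_le B b" and C: "pdo_order_le C c"
  shows "pdo_mult (pdo_mult A B) C = pdo_mult A (pdo_mult B C)"
proof (intro ext)
  fix r n
  have ABw: "pdo_order_le (pdo_mult A B) (a + b)" by (rule pdo_order_le_mult[OF A B])
  have BCw: "pdo_order_le (pdo_mult B C) (b + c)" by (rule pdo_order_le_mult[OF B C])
  have EBw: "pdo_order_le (pdo_mult (pdo_Dpow k) B) (k + b)" for k
    by (rule pdo_order_le_mult[OF pdo_order_le_Dpow B])
  have fin1: "finite_support (\<lambda>k. A k n * Dpow_mult_coeff k B s n)" for s
    by (rule finite_support_pdo_mult_terms[OF A B])
  have fin2: "finite_support (\<lambda>(s, k). A k n * Dpow_mult_coeff k B s n * Dpow_mult_coeff s C r n)"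
  proof (rule finite_support_prod[of "{r - c..a + b}" "{r - c - b..a}"])
    fix s k assume h: "A k n * Dpow_mult_coeff k B s n * Dpow_mult_coeff s C r n \<noteq> 0"
    then have "\<not> a < k" using pdo_order_leD[OF A] by force
    moreover have "\<not> k < s - b" using h Dpow_mult_coeff_eq_0[OF B] by force
    moreover have "\<not> s < r - c" using h Dpow_mult_coeff_eq_0[OF C] by force
    ultimately show "s \<in> {r - c..a + b} \<and> k \<in> {r - c - b..a}" by auto
  qed auto
  have fin3: "finite_support (\<lambda>s. Dpow_mult_coeff k B s n * Dpow_mult_coeff s C r n)" for k
  proof (rule finite_support_int_interval[of _ "r - c" "k + b"])
    fix s assume h: "Dpow_mult_coeff k B s n * Dpow_mult_coeff s C r n \<noteq> 0"
    then have "\<not> k < s - b" using Dpow_mult_coeff_eq_0[OF B] by force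
    moreover have "\<not> s < r - c" using h Dpow_mult_coeff_eq_0[OF C] by force
    ultimately show "r - c \<le> s \<and> s \<le> k + b" by simp
  qed
  have "pdo_mult (pdo_mult A B) C r n = fsum (\<lambda>s. pdo_mult A B s n * Dpow_mult_coeff s C r n)"
    by (rule pdo_mult_eq_fsum_Dpow_mult[OF ABw C])
  also have "\<dots> = fsum (\<lambda>s. fsum (\<lambda>k. A k n * Dpow_mult_coeff k B s n * Dpow_mult_coeff s C r n))"
    by (rule fsum_cong) (simp add: pdo_mult_eq_fsum_Dpow_mult[OF A B] fsum_mult_const[OF fin1])
  also have "\<dots> = fsum (\<lambda>k. fsum (\<lambda>s. A k n * Dpow_mult_coeff k B s n * Dpow_mult_coeff s C r n))"
    by (rule fsum_swap[OF fin2])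
  also have "\<dots> = fsum (\<lambda>k. A k n * fsum (\<lambda>s. Dpow_mult_coeff k B s n * Dpow_mult_coeff s C r n))"
    by (rule fsum_cong) (simp add: fsum_const_mult[OF fin3, symmetric] mult.assoc)
  also have "\<dots> = fsum (\<lambda>k. A k n * pdo_mult (pdo_mult (pdo_Dpow k) B) C r n)"
    by (rule fsum_cong) (simp add: pdo_mult_eq_fsum_Dpow_mult[OF EBw C] pdo_mult_Dpow_left[OF B])
  also have "\<dots> = fsum (\<lambda>k. A k n * Dpow_mult_coeff k (pdo_mult B C) r n)"
    by (rule fsum_cong) (simp add: pdo_mult_Dpow_assoc[OF B C] pdo_mult_Dpow_left[OF BCw])
  also have "\<dots> = pdo_mult A (pdo_mult B C) r n"
    by (rule pdo_mult_eq_fsum_Dpow_mult[OF A BCw, symmetric])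
  finally show "pdo_mult (pdo_mult A B) C r n = pdo_mult A (pdo_mult B C) r n" .
qed

lemma pdo_mult_assoc_wf:
  fixes A B C :: "('r::comm_ring_1) pdo"
  shows "pdo_wf A \<Longrightarrow> pdo_wf B \<Longrightarrow> pdo_wf C \<Longrightarrow> pdo_mult (pdo_mult A B) C = pdo_mult A (pdo_mult B C)"
  unfolding pdo_wf_iff_order_le using pdo_mult_assoc by blast

lemma pdo_wf_Dpow[simp]: "pdo_wf (pdo_Dpow k)"
  unfolding pdo_wf_iff_order_le using pdo_order_le_Dpow by blast

lemma pdo_wf_fn[simp]: "pdo_wf (pdo_fn g)"
  unfolding pdo_wf_iff_order_le using pdo_order_le_fn by blast

lemma pdo_wf_Delta[simp]: "pdo_wf pdo_Delta" and pdo_wf_Dinv[simp]: "pdo_wf pdo_Dinv"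
  by (simp_all add: pdo_Delta_eq_Dpow pdo_Dinv_eq_Dpow)

lemma pdo_mult_add_left:
  fixes A A' B :: "('r::comm_ring_1) pdo"
  assumes A: "pdo_order_le A a" and A': "pdo_order_le A' a" and B: "pdo_order_le B b"
  shows "pdo_mult (\<lambda>j n. A j n + A' j n) B = (\<lambda>r n. pdo_mult A B r n + pdo_mult A' B r n)"
proof (intro ext)
  fix r n
  have S: "pdo_order_le (\<lambda>j n. A j n + A' j n) a" by (rule pdo_order_le_add[OF A A'])
  show "pdo_mult (\<lambda>j n. A j n + A' j n) B r n = pdo_mult A B r n + pdo_mult A' B r n"
    unfolding pdo_mult_eq_fsum_Dpow_mult[OF S B] pdo_mult_eq_fsum_Dpow_mult[OF A B]
      pdo_mult_eq_fsum_Dpow_mult[OF A' B]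
    by (simp add: distrib_right fsum_add finite_support_pdo_mult_terms[OF A B]
        finite_support_pdo_mult_terms[OF A' B])
qed

lemma pdo_mult_neg_left:
  fixes A B :: "('r::comm_ring_1) pdo"
  assumes A: "pdo_order_le A a" and B: "pdo_order_le B b"
  shows "pdo_mult (\<lambda>j n. - A j n) B = (\<lambda>r n. - pdo_mult A B r n)"
proof (intro ext)
  fix r n
  have S: "pdo_order_le (\<lambda>j n. - A j n) a" by (rule pdo_order_le_neg[OF A])
  show "pdo_mult (\<lambda>j n. - A j n) B r n = - pdo_mult A B r n"
    unfolding pdo_mult_eq_fsum_Dpow_mult[OF S B] pdo_mult_eq_fsum_Dpow_mult[OF A B]
    by (simp add: fsum_neg[symmetric])
qed

lemma pdo_mult_zero_left: "pdo_mult (\<lambda>j n. 0) B = (\<lambda>r n. (0::'r::comm_ring_1))"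
  by (simp add: pdo_mult_def fsum_def case_prod_unfold)

lemma pdo_mult_sum_left:
  fixes A :: "'i \<Rightarrow> ('r::comm_ring_1) pdo"
  assumes I: "finite I" and A: "\<And>i. i \<in> I \<Longrightarrow> pdo_order_le (A i) a" and B: "pdo_order_le B b"
  shows "pdo_mult (\<lambda>j n. \<Sum>i\<in>I. A i j n) B = (\<lambda>r n. \<Sum>i\<in>I. pdo_mult (A i) B r n)"
  using I A
proof (induction I rule: finite_induct)
  case empty then show ?case by (simp add: pdo_mult_zero_left)
next
  case (insert x I)
  have "pdo_mult (\<lambda>j n. \<Sum>i\<in>insert x I. A i j n) B = pdo_mult (\<lambda>j n. A x j n + (\<Sum>i\<in>I. A i j n)) B"
    using insert by simp
  also have "\<dots> = (\<lambda>r n. pdo_mult (A x) B r n + pdo_mult (\<lambda>j n. \<Sum>i\<in>I. A i j n) B r n)"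
    by (rule pdo_mult_add_left[OF _ pdo_order_le_sum B]) (use insert in auto)
  finally show ?case using insert by simp
qed

lemma Dpow_mult_coeff_add:
  fixes B B' :: "('r::comm_ring_1) pdo"
  assumes B: "pdo_order_le B b" and B': "pdo_order_le B' b"
  shows "Dpow_mult_coeff k (\<lambda>j n. B j n + B' j n) r n = Dpow_mult_coeff k B r n + Dpow_mult_coeff k B' r n"
  unfolding Dpow_mult_coeff_def
  by (simp add: fdiff_add distrib_left fsum_add finite_support_Dpow_mult_terms[OF B]
      finite_support_Dpow_mult_terms[OF B'])

lemma pdo_mult_add_right:
  fixes A B B' :: "('r::comm_ring_1) pdo"
  assumes A: "pdo_order_le A a" and B: "pdo_order_le B b" and B': "pdo_order_le B' b"
  shows "pdo_mult A (\<lambda>j n. B j n + B' j n) = (\<lambda>r n. pdo_mult A B r n + pdo_mult A B' r n)"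
proof (intro ext)
  fix r n
  have S: "pdo_order_le (\<lambda>j n. B j n + B' j n) b" by (rule pdo_order_le_add[OF B B'])
  show "pdo_mult A (\<lambda>j n. B j n + B' j n) r n = pdo_mult A B r n + pdo_mult A B' r n"
    unfolding pdo_mult_eq_fsum_Dpow_mult[OF A S] pdo_mult_eq_fsum_Dpow_mult[OF A B]
      pdo_mult_eq_fsum_Dpow_mult[OF A B'] Dpow_mult_coeff_add[OF B B']
    by (simp add: distrib_left fsum_add finite_support_pdo_mult_terms[OF A B]
        finite_support_pdo_mult_terms[OF A B'])
qed

lemma pdo_mult_zero_right: "pdo_mult A (\<lambda>j n. 0) = (\<lambda>r n. (0::'r::comm_ring_1))"
  by (simp add: pdo_mult_def fdiff_zero_fun fsum_def case_prod_unfold)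

lemma pdo_mult_sum_right:
  fixes B :: "'i \<Rightarrow> ('r::comm_ring_1) pdo"
  assumes I: "finite I" and A: "pdo_order_le A a" and B: "\<And>i. i \<in> I \<Longrightarrow> pdo_order_le (B i) b"
  shows "pdo_mult A (\<lambda>j n. \<Sum>i\<in>I. B i j n) = (\<lambda>r n. \<Sum>i\<in>I. pdo_mult A (B i) r n)"
  using I B
proof (induction I rule: finite_induct)
  case empty then show ?case by (simp add: pdo_mult_zero_right)
next
  case (insert x I)
  have "pdo_mult A (\<lambda>j n. \<Sum>i\<in>insert x I. B i j n) = pdo_mult A (\<lambda>j n. B x j n + (\<Sum>i\<in>I. B i j n))"
    using insert by simp
  also have "\<dots> = (\<lambda>r n. pdo_mult A (B x) r n + pdo_mult A (\<lambda>j n. \<Sum>i\<in>I. B i j n) r n)"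
    by (rule pdo_mult_add_right[OF A _ pdo_order_le_sum]) (use insert in auto)
  finally show ?case using insert by simp
qed

context derivation
begin

lemma Dpow_mult_coeff_map:
  fixes B :: "'a pdo"
  assumes B: "pdo_order_le B b"
  shows "D (Dpow_mult_coeff k B r n) = Dpow_mult_coeff k (pdo_map D B) r n"
  unfolding Dpow_mult_coeff_def
  by (subst fsum[OF finite_support_Dpow_mult_terms[OF B]]) (simp add: of_int_mult fdiff pdo_map_def)

lemma leibniz_pdo_mult:
  fixes A B :: "'a pdo"
  assumes A: "pdo_order_le A a" and B: "pdo_order_le B b"
  shows "D (pdo_mult A B r n) = pdo_mult (pdo_map D A) B r n + pdo_mult A (pdo_map D B) r n"
proof -
  have A': "pdo_order_le (pdo_map D A) a" by (rule pdo_order_le_map[OF A]) simp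
  have B': "pdo_order_le (pdo_map D B) b" by (rule pdo_order_le_map[OF B]) simp
  have "D (pdo_mult A B r n) = fsum (\<lambda>k. D (A k n * Dpow_mult_coeff k B r n))"
    unfolding pdo_mult_eq_fsum_Dpow_mult[OF A B] by (rule fsum[OF finite_support_pdo_mult_terms[OF A B]])
  also have "\<dots> = fsum (\<lambda>k. pdo_map D A k n * Dpow_mult_coeff k B r n
      + A k n * Dpow_mult_coeff k (pdo_map D B) r n)"
    by (rule fsum_cong) (simp add: mult Dpow_mult_coeff_map[OF B] pdo_map_def add.commute)
  also have "\<dots> = pdo_mult (pdo_map D A) B r n + pdo_mult A (pdo_map D B) r n"
    unfolding pdo_mult_eq_fsum_Dpow_mult[OF A' B] pdo_mult_eq_fsum_Dpow_mult[OF A B']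
    by (rule fsum_add[OF finite_support_pdo_mult_terms[OF A' B] finite_support_pdo_mult_terms[OF A B']])
  finally show ?thesis .
qed

lemma pdo_map_inverse:
  assumes Z: "pdo_order_le Z z" and Zi: "pdo_order_le Zi zi"
    and inv: "pdo_mult Z Zi = pdo_one" "pdo_mult Zi Z = pdo_one"
  shows "pdo_map D Zi = (\<lambda>r n. - pdo_mult Zi (pdo_mult (pdo_map D Z) Zi) r n)"
proof -
  have DZ: "pdo_order_le (pdo_map D Z) z" by (rule pdo_order_le_map[of Z z D, OF Z zero])
  have DZi: "pdo_order_le (pdo_map D Zi) zi" by (rule pdo_order_le_map[of Zi zi D, OF Zi zero])
  have "pdo_mult (pdo_map D Zi) Z = (\<lambda>r n. - pdo_mult Zi (pdo_map D Z) r n)"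
  proof (intro ext)
    fix r n
    have "pdo_mult (pdo_map D Zi) Z r n + pdo_mult Zi (pdo_map D Z) r n = D (pdo_mult Zi Z r n)"
      by (rule leibniz_pdo_mult[OF Zi Z, symmetric])
    also have "\<dots> = 0" by (simp add: inv(2) pdo_one_def)
    finally show "pdo_mult (pdo_map D Zi) Z r n = - pdo_mult Zi (pdo_map D Z) r n"
      by (simp add: eq_neg_iff_add_eq_0)
  qed
  then have "pdo_mult (pdo_mult (pdo_map D Zi) Z) Zi =
      (\<lambda>r n. - pdo_mult (pdo_mult Zi (pdo_map D Z)) Zi r n)"
    using pdo_mult_neg_left[OF pdo_order_le_mult[OF Zi DZ] Zi] by simp
  then show ?thesis
    by (simp add: pdo_mult_assoc[OF DZi Z Zi] pdo_mult_assoc[OF Zi DZ Zi] inv(1) pdo_mult_one_right)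
qed

end

definition pdo_shift :: "int \<Rightarrow> 'r pdo \<Rightarrow> 'r pdo" where
  "pdo_shift c A = (\<lambda>j n. A j (n + c))"

lemma pdo_shift_mult: "pdo_mult (pdo_shift c A) (pdo_shift c B) = pdo_shift c (pdo_mult A B)"
  unfolding pdo_shift_def pdo_mult_def
  by (intro ext fsum_cong) (auto simp: fdiff_shift algebra_simps)

lemma pdo_shift_fn: "pdo_shift c (pdo_fn g) = pdo_fn (\<lambda>n. g (n + c))"
  by (simp add: pdo_shift_def pdo_fn_def)

lemma pdo_order_le_shift: "pdo_order_le A a \<Longrightarrow> pdo_order_le (pdo_shift c A) a"
  by (simp add: pdo_order_le_def pdo_shift_def)

lemma pdo_Delta_mult_fn:
  "pdo_mult pdo_Delta (pdo_fn (psi::'r::comm_ring_1 fn)) =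
     (\<lambda>j n. pdo_mult (pdo_fn (shf 1 psi)) pdo_Delta j n + pdo_fn (fdiff 1 psi) j n)"
  by (intro ext) (simp only: pdo_mult_Delta_left pdo_mult_fn_left, simp add: pdo_fn_def pdo_Delta_def shf_def)

lemma pdo_Delta_Dinv: "pdo_mult pdo_Delta pdo_Dinv = (pdo_one :: ('r::comm_ring_1) pdo)"
  by (simp add: pdo_Dinv_eq_Dpow pdo_Delta_eq_Dpow pdo_Dpow_mult_Dpow pdo_one_eq_Dpow)

section \<open>Orders and coefficient maps of Laurent series\<close>

definition vanishes_below :: "('a::zero) fls \<Rightarrow> int \<Rightarrow> bool" where
  "vanishes_below f a \<longleftrightarrow> (\<forall>m<a. f $$ m = 0)"

lemma vanishes_below_mono: "vanishes_below f a \<Longrightarrow> b \<le> a \<Longrightarrow> vanishes_below f b"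
  by (simp add: vanishes_below_def)

lemma vanishes_below_zero[simp]: "vanishes_below 0 a" by (simp add: vanishes_below_def)

lemma vanishes_below_const: "vanishes_below (fls_const c) 0" by (simp add: vanishes_below_def)

lemma vanishes_below_one: "vanishes_below (1::'a::{zero,one} fls) 0"
  by (simp add: vanishes_below_def)

lemma vanishes_below_of_int: "vanishes_below (of_int c :: 'a::ring_1 fls) 0"
  by (simp add: vanishes_below_def fls_of_int)

lemma vanishes_below_subdegree: "vanishes_below f (fls_subdegree f)"
  by (simp add: vanishes_below_def)

lemma vanishes_below_diff:
  "vanishes_below f a \<Longrightarrow> vanishes_below g a \<Longrightarrow> vanishes_below (f - (g::'a::ab_group_add fls)) a"
  by (simp add: vanishes_below_def)

lemma vanishes_below_sum:
  "(\<And>x. x \<in> I \<Longrightarrow> vanishes_below (f x) a) \<Longrightarrow> vanishes_below (\<Sum>x\<in>I. f x :: 'a::comm_monoid_add fls) a"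
  by (simp add: vanishes_below_def fls_nth_sum)

lemma vanishes_below_fsum:
  "(\<And>x. vanishes_below (f x) a) \<Longrightarrow> vanishes_below (fsum (f :: 'b \<Rightarrow> 'a::comm_monoid_add fls)) a"
  unfolding fsum_def by (rule vanishes_below_sum) auto

lemma vanishes_below_le_subdegree: "f \<noteq> 0 \<Longrightarrow> vanishes_below f a \<Longrightarrow> a \<le> fls_subdegree f"
  by (rule fls_subdegree_geI) (auto simp: vanishes_below_def)

lemma vanishes_below_mult:
  fixes f g :: "'a::comm_ring_1 fls"
  assumes "vanishes_below f a" "vanishes_below g b"
  shows "vanishes_below (f * g) (a + b)"
proof (cases "f = 0 \<or> g = 0")
  case True then show ?thesis by auto
next
  case False
  then have "a \<le> fls_subdegree f" "b \<le> fls_subdegree g"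
    using vanishes_below_le_subdegree assms by auto
  then show ?thesis unfolding vanishes_below_def by (auto intro!: fls_times_nth_eq0)
qed

lemma vanishes_below_pow:
  fixes f :: "'a::comm_ring_1 fls"
  assumes "vanishes_below f a"
  shows "vanishes_below (f ^ k) (int k * a)"
proof (induction k)
  case 0 then show ?case by (simp add: vanishes_below_one)
next
  case (Suc k)
  have "vanishes_below (f * f ^ k) (a + int k * a)" by (rule vanishes_below_mult[OF assms Suc])
  then show ?case by (simp add: algebra_simps)
qed

lemma fls_X_inv_times_nth: "(fls_X_inv * f) $$ m = (f::'a::comm_ring_1 fls) $$ (m + 1)"
  by (simp add: fls_X_inv_times_conv_shift)

lemma fls_times_nth_range:
  fixes f g :: "'a::comm_ring_1 fls"
  assumes "vanishes_below f a" "vanishes_below g b"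
  shows "(f * g) $$ m = (\<Sum>i\<in>{a..m - b}. f $$ i * g $$ (m - i))"
proof (cases "f = 0 \<or> g = 0")
  case True
  then show ?thesis by auto
next
  case False
  define df where "df = fls_subdegree f"
  define dg where "dg = fls_subdegree g"
  have a: "a \<le> df" "b \<le> dg"
    using vanishes_below_le_subdegree assms False by (auto simp: df_def dg_def)
  have "(f * g) $$ m = (\<Sum>i\<in>{df..m - dg}. f $$ i * g $$ (m - i))"
    unfolding df_def dg_def by (rule fls_times_nth(2))
  also have "\<dots> = (\<Sum>i\<in>{a..m - b}. f $$ i * g $$ (m - i))"
  proof (rule sum.mono_neutral_left)
    show "{df..m - dg} \<subseteq> {a..m - b}" using a by auto
    show "\<forall>i\<in>{a..m - b} - {df..m - dg}. f $$ i * g $$ (m - i) = 0"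
    proof
      fix i assume "i \<in> {a..m - b} - {df..m - dg}"
      then have "i < df \<or> m - i < dg" by auto
      then show "f $$ i * g $$ (m - i) = 0" by (auto simp: df_def dg_def)
    qed
  qed simp
  finally show ?thesis .
qed

lemma fls_cmap_nth: "h 0 = 0 \<Longrightarrow> fls_cmap h f $$ m = h (f $$ m)"
  unfolding fls_cmap_def
  by (rule nth_Abs_fls_lower_bound[of "fls_subdegree f"]) auto

lemma vanishes_below_cmap: "h 0 = 0 \<Longrightarrow> vanishes_below f a \<Longrightarrow> vanishes_below (fls_cmap h f) a"
  by (simp add: vanishes_below_def fls_cmap_nth)

definition coeffs_const :: "('a::zero \<Rightarrow> 'a) \<Rightarrow> 'a fls \<Rightarrow> bool" where
  "coeffs_const D g \<longleftrightarrow> (\<forall>m. D (g $$ m) = 0)"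

context derivation
begin

lemma cmap_mult_coeffs_const:
  assumes "coeffs_const D g"
  shows "fls_cmap D (f * g) = fls_cmap D f * g"
proof (rule fls_eqI)
  fix m
  let ?a = "fls_subdegree f" and ?b = "fls_subdegree g"
  have l1: "vanishes_below (fls_cmap D f) ?a"
    by (rule vanishes_below_cmap[of D, OF zero vanishes_below_subdegree[of f]])
  have "fls_cmap D (f * g) $$ m = D (\<Sum>i\<in>{?a..m - ?b}. f $$ i * g $$ (m - i))"
    by (simp add: fls_cmap_nth fls_times_nth_range[OF vanishes_below_subdegree vanishes_below_subdegree])
  also have "\<dots> = (\<Sum>i\<in>{?a..m - ?b}. fls_cmap D f $$ i * g $$ (m - i))"
    using assms by (simp add: sum mult fls_cmap_nth coeffs_const_def)
  also have "\<dots> = (fls_cmap D f * g) $$ m"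
    by (simp add: fls_times_nth_range[OF l1 vanishes_below_subdegree])
  finally show "fls_cmap D (f * g) $$ m = (fls_cmap D f * g) $$ m" .
qed

lemma coeffs_const_mult: "coeffs_const D f \<Longrightarrow> coeffs_const D g \<Longrightarrow> coeffs_const D (f * g)"
  unfolding coeffs_const_def
  by (simp add: fls_times_nth_range[OF vanishes_below_subdegree vanishes_below_subdegree] sum mult)

lemma coeffs_const_add: "coeffs_const D f \<Longrightarrow> coeffs_const D g \<Longrightarrow> coeffs_const D (f + g)"
  by (simp add: coeffs_const_def add)

lemma coeffs_const_one: "coeffs_const D 1"
  by (simp add: coeffs_const_def)

lemma coeffs_const_X_inv: "coeffs_const D fls_X_inv"
  by (simp add: coeffs_const_def)

lemma coeffs_const_power: "coeffs_const D f \<Longrightarrow> coeffs_const D (f ^ k)"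
  by (induction k) (simp_all add: coeffs_const_one coeffs_const_mult)

end

section \<open>The series \<open>(1 + \<lambda>)\<^sup>n\<close> and the action on it\<close>

lemma qinv_nth: "(qinv :: 'a::comm_ring_1 fls) $$ m = (if 1 \<le> m then (-1) ^ nat (m - 1) else 0)"
  unfolding qinv_def by (rule nth_Abs_fls_lower_bound[of 1]) auto

lemma qinv_mult: "(1 + fls_X_inv) * (qinv :: 'a::comm_ring_1 fls) = 1"
proof (rule fls_eqI)
  fix m
  have "((1 + fls_X_inv) * (qinv :: 'a fls)) $$ m = qinv $$ m + qinv $$ (m + 1)"
    by (simp add: distrib_right fls_X_inv_times_nth)
  also have "\<dots> = (1 :: 'a fls) $$ m"
  proof (cases "1 \<le> m")
    case True
    then have "nat m = Suc (nat (m - 1))" by simp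
    then show ?thesis using True by (simp add: qinv_nth)
  next
    case False
    then show ?thesis by (cases "m = 0") (auto simp: qinv_nth)
  qed
  finally show "((1 + fls_X_inv) * (qinv :: 'a fls)) $$ m = (1 :: 'a fls) $$ m" .
qed

lemma qpow_Suc: "qpow (n + 1) = (1 + fls_X_inv) * (qpow n :: 'a::comm_ring_1 fls)"
proof -
  consider "0 \<le> n" | "n = -1" | "n < -1" by linarith
  then show ?thesis
  proof cases
    case 1
    then have "nat (n + 1) = Suc (nat n)" by simp
    then show ?thesis using 1 by (simp add: qpow_def)
  next
    case 2
    then show ?thesis by (simp add: qpow_def qinv_mult)
  next
    case 3
    then have "nat (- n) = Suc (nat (- (n + 1)))" by simp
    then have "qpow n = qinv * (qpow (n + 1) :: 'a fls)" using 3 by (simp add: qpow_def)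
    then show ?thesis by (simp add: mult.assoc[symmetric] qinv_mult)
  qed
qed

lemma vanishes_below_qpow: "vanishes_below (qpow n :: 'a::comm_ring_1 fls) (- n)"
proof (cases "0 \<le> n")
  case True
  have "vanishes_below (1 + fls_X_inv :: 'a fls) (-1)" by (simp add: vanishes_below_def)
  then have "vanishes_below ((1 + fls_X_inv :: 'a fls) ^ nat n) (int (nat n) * (-1))"
    by (rule vanishes_below_pow)
  then show ?thesis using True by (simp add: qpow_def)
next
  case False
  have "vanishes_below (qinv :: 'a fls) 1" by (simp add: vanishes_below_def qinv_nth)
  then have "vanishes_below ((qinv :: 'a fls) ^ nat (- n)) (int (nat (- n)) * 1)"
    by (rule vanishes_below_pow)
  then show ?thesis using False by (simp add: qpow_def)
qed

lemma (in derivation) coeffs_const_qpow: "coeffs_const D (qpow n)"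
proof -
  have "D ((-1) ^ k) = 0" for k
    using of_int[of "(-1) ^ k"] by simp
  then have "coeffs_const D qinv"
    by (simp add: coeffs_const_def qinv_nth)
  then show ?thesis
    by (simp add: qpow_def coeffs_const_power coeffs_const_add coeffs_const_one coeffs_const_X_inv)
qed

lemma pdo_sym_nth: "pdo_order_le P b \<Longrightarrow> pdo_sym P n $$ m = P (- m) n"
  unfolding pdo_sym_def by (rule nth_Abs_fls_lower_bound[of "- b"]) (auto simp: pdo_order_le_def)

lemma vanishes_below_sym: "pdo_order_le P b \<Longrightarrow> vanishes_below (pdo_sym P n) (- b)"
  by (simp add: vanishes_below_def pdo_sym_nth pdo_order_le_def)

lemma pdo_sym_sum:
  fixes P :: "'i \<Rightarrow> ('a::comm_ring_1) pdo"
  assumes "finite I" "\<And>i. i \<in> I \<Longrightarrow> pdo_order_le (P i) b"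
  shows "pdo_sym (\<lambda>j n. \<Sum>i\<in>I. P i j n) n = (\<Sum>i\<in>I. pdo_sym (P i) n)"
proof -
  have w: "pdo_order_le (\<lambda>j n. \<Sum>i\<in>I. P i j n) b" by (rule pdo_order_le_sum) (rule assms(2))
  show ?thesis by (rule fls_eqI) (simp add: pdo_sym_nth[OF w] fls_nth_sum pdo_sym_nth[OF assms(2)])
qed

lemma pdo_sym_fn_mult:
  assumes P: "pdo_order_le P b"
  shows "pdo_sym (\<lambda>j n. g n * P j n) n = fls_const (g n) * (pdo_sym P n :: 'a::comm_ring_1 fls)"
proof -
  have w: "pdo_order_le (\<lambda>j n. g n * P j n) b" using P by (simp add: pdo_order_le_def)
  show ?thesis by (rule fls_eqI) (simp add: pdo_sym_nth[OF w] pdo_sym_nth[OF P])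
qed

lemma (in derivation) cmap_pdo_sym:
  assumes P: "pdo_order_le P b"
  shows "fls_cmap D (pdo_sym P n) = pdo_sym (pdo_map D P) n"
proof -
  have w: "pdo_order_le (pdo_map D P) b" by (rule pdo_order_le_map[of P b D, OF P zero])
  show ?thesis
    by (rule fls_eqI)
       (simp only: fls_cmap_nth[of D, OF zero] pdo_sym_nth[OF w] pdo_sym_nth[OF P], simp add: pdo_map_def)
qed

lemma vanishes_below_wave: "pdo_order_le P b \<Longrightarrow> vanishes_below (wave P n) (- b - n)"
  unfolding wave_def using vanishes_below_mult[OF vanishes_below_sym vanishes_below_qpow] by simp

lemma wave_sum:
  assumes "finite I" "\<And>i. i \<in> I \<Longrightarrow> pdo_order_le (P i) b"
  shows "wave (\<lambda>j n. \<Sum>i\<in>I. P i j n) n = (\<Sum>i\<in>I. wave (P i) n)"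
  by (simp add: wave_def pdo_sym_sum[OF assms] sum_distrib_right)

lemma wave_fn_mult:
  assumes "pdo_order_le P b"
  shows "wave (pdo_mult (pdo_fn g) P) n = fls_const (g n) * wave P n"
proof -
  have "pdo_mult (pdo_fn g) P = (\<lambda>j n. g n * P j n)"
    by (intro ext) (simp add: pdo_mult_fn_left)
  then show ?thesis
    unfolding wave_def by (simp add: pdo_sym_fn_mult[OF assms] mult.assoc)
qed

lemma (in derivation) cmap_wave:
  assumes "pdo_order_le P b"
  shows "fls_cmap D (wave P n) = wave (pdo_map D P) n"
  unfolding wave_def cmap_mult_coeffs_const[OF coeffs_const_qpow] cmap_pdo_sym[OF assms] ..

lemma wave_diff:
  assumes P: "pdo_order_le P b"
  shows "wave P (n + 1) - wave P n = wave (pdo_mult pdo_Delta P) n"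
proof -
  have DP: "pdo_order_le (pdo_mult pdo_Delta P) (1 + b)"
    unfolding pdo_Delta_eq_Dpow by (rule pdo_order_le_mult[OF pdo_order_le_Dpow P])
  have sym: "(1 + fls_X_inv) * pdo_sym P (n + 1) - pdo_sym P n = pdo_sym (pdo_mult pdo_Delta P) n"
    by (rule fls_eqI)
       (simp add: distrib_right fls_X_inv_times_nth pdo_sym_nth[OF P] pdo_sym_nth[OF DP]
         pdo_mult_Delta_left algebra_simps)
  have "wave P (n + 1) - wave P n = ((1 + fls_X_inv) * pdo_sym P (n + 1) - pdo_sym P n) * qpow n"
    unfolding wave_def qpow_Suc by (simp add: algebra_simps)
  then show ?thesis
    unfolding sym wave_def .
qed

lemma wave_Dinv_fn_Delta_diff:
  fixes Z :: "'a::comm_ring_1 pdo" and g :: "'a fn"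
  defines "V \<equiv> pdo_mult pdo_Dinv (pdo_mult (pdo_fn g) (pdo_mult pdo_Delta Z))"
  assumes Z: "pdo_order_le Z b"
  shows "wave V (n + 1) - wave V n = fls_const (g n) * (wave Z (n + 1) - wave Z n)"
proof -
  have DZ: "pdo_order_le (pdo_mult pdo_Delta Z) (1 + b)"
    unfolding pdo_Delta_eq_Dpow by (rule pdo_order_le_mult[OF pdo_order_le_Dpow Z])
  have gDZ: "pdo_order_le (pdo_mult (pdo_fn g) (pdo_mult pdo_Delta Z)) (0 + (1 + b))"
    by (rule pdo_order_le_mult[OF pdo_order_le_fn DZ])
  have "pdo_order_le V (-1 + (0 + (1 + b)))"
    unfolding V_def pdo_Dinv_eq_Dpow by (rule pdo_order_le_mult[OF pdo_order_le_Dpow gDZ])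
  then have "wave V (n + 1) - wave V n = wave (pdo_mult pdo_Delta V) n"
    by (rule wave_diff)
  also have "pdo_mult pdo_Delta V = pdo_mult (pdo_fn g) (pdo_mult pdo_Delta Z)"
    unfolding V_def pdo_Delta_eq_Dpow pdo_Dinv_eq_Dpow
    by (simp add: pdo_mult_assoc[OF pdo_order_le_Dpow pdo_order_le_Dpow gDZ[unfolded pdo_Delta_eq_Dpow],
          symmetric] pdo_Dpow_mult_Dpow pdo_mult_Dpow0_left)
  also have "wave \<dots> n = fls_const (g n) * (wave Z (n + 1) - wave Z n)"
    unfolding wave_fn_mult[OF DZ] wave_diff[OF Z] ..
  finally show ?thesis .
qed

section \<open>Uniqueness of potentials\<close>

lemma shift_invariant_const:
  assumes "\<And>n. C (n + 1) = C n"
  shows "C n = C (p :: int)"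
proof (induction n rule: int_induct[where k = p])
  case (step2 i)
  then show ?case using assms[of "i - 1"] by simp
qed (use assms in simp_all)

lemma eq_if_diff_eq:
  fixes S W :: "int \<Rightarrow> 'a::ab_group_add fls"
  assumes diff: "\<And>n. S (n + 1) - S n = W (n + 1) - W n"
    and S: "\<And>n. vanishes_below (S n) (\<beta> n)" and W: "\<And>n. vanishes_below (W n) (\<beta> n)"
    and unbounded: "\<And>m. \<exists>k. m < \<beta> k"
  shows "S n = W n"
proof -
  define C where "C n = S n - W n" for n
  have "C (k + 1) = C k" for k
    using diff[of k] by (simp add: C_def algebra_simps)
  then have const: "C n = C k" for k
    by (rule shift_invariant_const)
  have "C n = 0"
  proof (rule fls_eqI)
    fix m
    obtain k where "m < \<beta> k" using unbounded by blast
    moreover have "vanishes_below (C k) (\<beta> k)"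
      unfolding C_def by (rule vanishes_below_diff[OF S W])
    ultimately show "C n $$ m = 0 $$ m"
      by (simp add: const[of k] vanishes_below_def)
  qed
  then show ?thesis by (simp add: C_def)
qed

text \<open>The charge term \<open>c \<lambda> S\<close> of the \<open>t\<^sub>1\<close>-derivative lowers the order of \<open>S\<close> by exactly one,
  and the coefficientwise derivative cannot cancel its lowest coefficient.\<close>

lemma vanishes_below_of_tder:
  fixes S :: "'a::comm_ring_1 fls fn"
  assumes d0: "dt 1 0 = 0" and c: "c = 1 \<or> c = -1" and L: "vanishes_below (tder dt c 1 S n) a"
  shows "vanishes_below (S n) a"
proof (rule ccontr)
  assume "\<not> vanishes_below (S n) a"
  then obtain m where m: "m < a" "S n $$ m \<noteq> 0" by (auto simp: vanishes_below_def)
  then have nz: "S n \<noteq> 0" by auto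
  define m0 where "m0 = fls_subdegree (S n)"
  have "m0 \<le> m" using m by (simp add: m0_def fls_subdegree_leI)
  have tt: "tder dt c 1 S n = fls_cmap (dt 1) (S n) + of_int c * (fls_X_intpow (-1) * S n)"
    by (simp add: tder_def mult.assoc)
  have "tder dt c 1 S n $$ (m0 - 1) = dt 1 (S n $$ (m0 - 1)) + of_int c * S n $$ m0"
  proof -
    have "fls_X_intpow (-1) * S n = fls_shift 1 (S n)"
      using fls_X_intpow_times_conv_shift(1)[of "-1" "S n"] by simp
    moreover have cm: "fls_cmap (dt 1) (S n) $$ (m0 - 1) = dt 1 (S n $$ (m0 - 1))"
      by (rule fls_cmap_nth[of "dt 1", OF d0])
    ultimately show ?thesis unfolding tt fls_plus_nth cm by (simp add: fls_of_int)
  qed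
  also have "S n $$ (m0 - 1) = 0" by (simp add: m0_def)
  finally have "tder dt c 1 S n $$ (m0 - 1) = of_int c * S n $$ m0" using d0 by simp
  moreover have "S n $$ m0 \<noteq> 0" using nz by (simp add: m0_def)
  ultimately have "tder dt c 1 S n $$ (m0 - 1) \<noteq> 0" using c by auto
  moreover have "m0 - 1 < a" using \<open>m0 \<le> m\<close> m by simp
  ultimately show False using L by (simp add: vanishes_below_def)
qed

definition pdo_fps_coeffs :: "('a::zero) fls pdo \<Rightarrow> bool" where
  "pdo_fps_coeffs A \<longleftrightarrow> (\<forall>k n. vanishes_below (A k n) 0)"

lemma vanishes_below_fdiff: "(\<And>p. vanishes_below (f p) a) \<Longrightarrow> vanishes_below (fdiff i f p) (a::int)"
  by (induction i arbitrary: p) (auto intro: vanishes_below_diff)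

lemma vanishes_below_fdiff_minus:
  fixes f :: "int \<Rightarrow> 'a::comm_ring_1 fls"
  assumes "\<And>p. vanishes_below (f p) (c - p)"
  shows "vanishes_below (fdiff i f p) (c - p - int i)"
proof (induction i arbitrary: p)
  case 0 then show ?case using assms by simp
next
  case (Suc i)
  have a: "vanishes_below (fdiff i f (p + 1)) (c - p - int (Suc i))"
    using Suc[of "p + 1"] by (simp add: algebra_simps)
  have b: "vanishes_below (fdiff i f p) (c - p - int (Suc i))"
    by (rule vanishes_below_mono[OF Suc]) simp
  show ?case using vanishes_below_diff[OF a b] by simp
qed

lemma vanishes_below_fdiff_plus:
  fixes f :: "int \<Rightarrow> 'a::comm_ring_1 fls"
  assumes "\<And>p. vanishes_below (f p) (p + c)"
  shows "vanishes_below (fdiff i f p) (p + c)"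
proof (induction i arbitrary: p)
  case 0 then show ?case using assms by simp
next
  case (Suc i)
  have a: "vanishes_below (fdiff i f (p + 1)) (p + c)"
    by (rule vanishes_below_mono[OF Suc[of "p + 1"]]) simp
  show ?case using vanishes_below_diff[OF a Suc[of p]] by simp
qed

lemma vanishes_below_mult_of_int:
  fixes x y z :: "'a::comm_ring_1 fls"
  assumes "vanishes_below x a" "vanishes_below z c"
  shows "vanishes_below (x * of_int b * z) (a + c)"
  using vanishes_below_mult[OF vanishes_below_mult[OF assms(1) vanishes_below_of_int] assms(2)] by simp

lemma vanishes_below_pdo_mult_termwise:
  assumes "\<And>k i. vanishes_below (A k n * of_int (ibinom k i) * fdiff i (B (r - k + int i)) (n + k - int i)) a"
  shows "vanishes_below (pdo_mult A B r n) a"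
  unfolding pdo_mult_def by (rule vanishes_below_fsum) (simp add: assms split: prod.split)

lemma vanishes_below_pdo_mult_minus:
  fixes A B :: "('a::comm_ring_1) fls pdo"
  assumes A: "pdo_fps_coeffs A" "pdo_order_le A K" and B: "\<And>j p. vanishes_below (B j p) (c - p)"
  shows "vanishes_below (pdo_mult A B r n) (c - K - n)"
proof (rule vanishes_below_pdo_mult_termwise)
  fix k i
  show "vanishes_below (A k n * of_int (ibinom k i) * fdiff i (B (r - k + int i)) (n + k - int i))
      (c - K - n)"
  proof (cases "K < k")
    case True
    then show ?thesis using pdo_order_leD[OF A(2)] by simp
  next
    case False
    have "vanishes_below (fdiff i (B (r - k + int i)) (n + k - int i)) (c - (n + k - int i) - int i)"
      by (rule vanishes_below_fdiff_minus) (rule B)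
    from vanishes_below_mult_of_int[OF A(1)[unfolded pdo_fps_coeffs_def, rule_format, of k n] this,
        of "ibinom k i"]
    show ?thesis using False by (auto elim: vanishes_below_mono)
  qed
qed

lemma vanishes_below_pdo_mult_fps_right:
  fixes A B :: "('a::comm_ring_1) fls pdo"
  assumes A: "\<And>k n. vanishes_below (A k n) (\<alpha> n)" and B: "pdo_fps_coeffs B"
  shows "vanishes_below (pdo_mult A B r n) (\<alpha> n)"
proof (rule vanishes_below_pdo_mult_termwise)
  fix k i
  have "vanishes_below (fdiff i (B (r - k + int i)) (n + k - int i)) 0"
    by (rule vanishes_below_fdiff) (use B in \<open>simp add: pdo_fps_coeffs_def\<close>)
  from vanishes_below_mult_of_int[OF A this]
  show "vanishes_below (A k n * of_int (ibinom k i) * fdiff i (B (r - k + int i)) (n + k - int i)) (\<alpha> n)"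
    by simp
qed

lemma pdo_fps_coeffs_mult:
  fixes A B :: "('a::comm_ring_1) fls pdo"
  assumes "pdo_fps_coeffs A" "pdo_fps_coeffs B"
  shows "pdo_fps_coeffs (pdo_mult A B)"
  using vanishes_below_pdo_mult_fps_right[of A "\<lambda>n. 0" B] assms by (auto simp: pdo_fps_coeffs_def)

lemma vanishes_below_pdo_mult_plus:
  fixes A B :: "('a::comm_ring_1) fls pdo"
  assumes A: "pdo_fps_coeffs A" and B: "\<And>j p. vanishes_below (B j p) (p + j + c)"
  shows "vanishes_below (pdo_mult A B r n) (n + r + c)"
proof (rule vanishes_below_pdo_mult_termwise)
  fix k i
  have "vanishes_below (fdiff i (B (r - k + int i)) (n + k - int i)) ((n + k - int i) + ((r - k + int i) + c))"
    by (rule vanishes_below_fdiff_plus) (use B[of "r - k + int i"] in \<open>simp add: add.assoc\<close>)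
  from vanishes_below_mult_of_int[OF A[unfolded pdo_fps_coeffs_def, rule_format, of k n] this,
      of "ibinom k i"]
  show "vanishes_below (A k n * of_int (ibinom k i) * fdiff i (B (r - k + int i)) (n + k - int i))
      (n + r + c)"
    by (simp add: algebra_simps)
qed

lemma pdo_fps_coeffs_Dpow: "pdo_fps_coeffs (pdo_Dpow k)"
  by (simp add: pdo_fps_coeffs_def pdo_Dpow_def vanishes_below_def)

lemma pdo_fps_coeffs_Gamma: "pdo_fps_coeffs pdo_Gamma"
  by (simp add: pdo_fps_coeffs_def pdo_Gamma_def vanishes_below_def)

lemma pdo_fps_coeffs_fn: "(\<And>n. vanishes_below (g n) 0) \<Longrightarrow> pdo_fps_coeffs (pdo_fn g)"
  by (simp add: pdo_fps_coeffs_def pdo_fn_def)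

lemma pdo_fps_coeffs_map_const: "pdo_fps_coeffs (pdo_map fls_const L)"
  by (simp add: pdo_fps_coeffs_def pdo_map_def vanishes_below_const)

lemma pdo_fps_coeffs_pos: "pdo_fps_coeffs A \<Longrightarrow> pdo_fps_coeffs (pdo_pos A)"
  by (simp add: pdo_fps_coeffs_def pdo_pos_def)

lemma pdo_order_le_pos: "pdo_order_le A a \<Longrightarrow> pdo_order_le (pdo_pos A) a"
  by (simp add: pdo_order_le_def pdo_pos_def)

lemma pdo_order_le_Gamma: "pdo_order_le pdo_Gamma 1" by (simp add: pdo_order_le_def pdo_Gamma_def)

lemma pdo_pow_1: "pdo_pow P 1 = (P :: ('r::comm_ring_1) pdo)"
  by (simp add: pdo_pow_def pdo_mult_one_right)

lemma vanishes_below_sep_rhs_minus: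
  fixes L :: "'a::comm_ring_1 pdo" and F G :: "'a fls fn"
  assumes L: "pdo_order_le L l" and l: "0 \<le> l"
    and F: "\<And>n. vanishes_below (F n) (c - n)" and G: "\<And>n. vanishes_below (G n) 0"
  shows "vanishes_below (pdo_res (pdo_mult pdo_Gamma (pdo_mult pdo_Dinv (pdo_mult (pdo_fn G)
      (pdo_mult (pdo_pos (pdo_pow (pdo_map fls_const L) 1)) (pdo_mult (pdo_fn F) pdo_Dinv))))) n)
    (c - l - 1 - n)"
proof -
  let ?P = "pdo_pos (pdo_pow (pdo_map fls_const L) 1) :: 'a fls pdo"
  have Pc: "pdo_fps_coeffs ?P"
    unfolding pdo_pow_1 by (rule pdo_fps_coeffs_pos[OF pdo_fps_coeffs_map_const])
  have Pw: "pdo_order_le ?P l"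
    unfolding pdo_pow_1 by (rule pdo_order_le_pos, rule pdo_order_le_map[OF L]) simp
  have Dc: "pdo_fps_coeffs (pdo_Dinv :: 'a fls pdo)"
    by (simp add: pdo_Dinv_eq_Dpow pdo_fps_coeffs_Dpow)
  have Dw: "pdo_order_le (pdo_Dinv :: 'a fls pdo) 0"
    unfolding pdo_Dinv_eq_Dpow by (rule pdo_order_le_mono[OF pdo_order_le_Dpow]) simp
  let ?Y1 = "pdo_mult (pdo_fn F) pdo_Dinv"
  have Y1: "vanishes_below (?Y1 j p) (c - p)" for j p
    by (rule vanishes_below_pdo_mult_fps_right[OF _ Dc]) (simp add: pdo_fn_def F)
  let ?Y2 = "pdo_mult ?P ?Y1"
  have Y2: "vanishes_below (?Y2 j p) ((c - l) - p)" for j p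
    by (rule vanishes_below_pdo_mult_minus[OF Pc Pw Y1])
  let ?Y3 = "pdo_mult (pdo_fn G) ?Y2"
  have Y3: "vanishes_below (?Y3 j p) ((c - l) - p)" for j p
  proof -
    have "vanishes_below (?Y3 j p) ((c - l) - 0 - p)"
      by (rule vanishes_below_pdo_mult_minus[OF pdo_fps_coeffs_fn[OF G] pdo_order_le_fn Y2])
    then show ?thesis by simp
  qed
  let ?Y4 = "pdo_mult pdo_Dinv ?Y3"
  have Y4: "vanishes_below (?Y4 j p) ((c - l) - p)" for j p
  proof -
    have "vanishes_below (?Y4 j p) ((c - l) - 0 - p)"
      by (rule vanishes_below_pdo_mult_minus[OF Dc Dw Y3])
    then show ?thesis by simp
  qed
  have "vanishes_below (pdo_mult pdo_Gamma ?Y4 (-1) n) ((c - l) - 1 - n)"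
    by (rule vanishes_below_pdo_mult_minus[OF pdo_fps_coeffs_Gamma pdo_order_le_Gamma Y4])
  then show ?thesis by (simp add: pdo_res_def)
qed

lemma vanishes_below_sep_rhs_plus:
  fixes L :: "'a::comm_ring_1 pdo" and G :: "'a fls fn" and phi :: "'a fn"
  assumes L: "pdo_order_le L l" and G: "\<And>n. vanishes_below (G n) (n + g0)"
  shows "vanishes_below (pdo_res (pdo_mult pdo_Gamma (pdo_mult pdo_Dinv (pdo_mult (pdo_fn G)
      (pdo_mult (pdo_pos (pdo_pow (pdo_map fls_const L) 1))
        (pdo_mult (pdo_fn (\<lambda>n. fls_const (phi n))) pdo_Dinv))))) n)
    (n + g0 - l)"
proof -
  let ?P = "pdo_pos (pdo_pow (pdo_map fls_const L) 1) :: 'a fls pdo"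
  have Pc: "pdo_fps_coeffs ?P"
    unfolding pdo_pow_1 by (rule pdo_fps_coeffs_pos[OF pdo_fps_coeffs_map_const])
  have Pw: "pdo_order_le ?P l"
    unfolding pdo_pow_1 by (rule pdo_order_le_pos, rule pdo_order_le_map[OF L]) simp
  have Dc: "pdo_fps_coeffs (pdo_Dinv :: 'a fls pdo)"
    by (simp add: pdo_Dinv_eq_Dpow pdo_fps_coeffs_Dpow)
  have Dw: "pdo_order_le (pdo_Dinv :: 'a fls pdo) (-1)"
    unfolding pdo_Dinv_eq_Dpow by (rule pdo_order_le_Dpow)
  let ?Y1 = "pdo_mult (pdo_fn (\<lambda>n. fls_const (phi n))) pdo_Dinv"
  have Y1c: "pdo_fps_coeffs ?Y1"
    by (rule pdo_fps_coeffs_mult[OF pdo_fps_coeffs_fn[OF vanishes_below_const] Dc])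
  have Y1w: "pdo_order_le ?Y1 (0 + -1)" by (rule pdo_order_le_mult[OF pdo_order_le_fn Dw])
  let ?Y2 = "pdo_mult ?P ?Y1"
  have Y2c: "pdo_fps_coeffs ?Y2" by (rule pdo_fps_coeffs_mult[OF Pc Y1c])
  have Y2w: "pdo_order_le ?Y2 (l + (0 + -1))" by (rule pdo_order_le_mult[OF Pw Y1w])
  let ?Y3 = "pdo_mult (pdo_fn G) ?Y2"
  have Y3: "vanishes_below (?Y3 j p) (p + j + (g0 - (l - 1)))" for j p
  proof (cases "l - 1 < j")
    case True
    then have "?Y2 j p = 0" using pdo_order_leD[OF Y2w] by simp
    then show ?thesis by (simp add: pdo_mult_fn_left)
  next
    case False
    have "vanishes_below (G p * ?Y2 j p) (p + g0 + 0)"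
      by (rule vanishes_below_mult[OF G]) (use Y2c in \<open>simp add: pdo_fps_coeffs_def\<close>)
    moreover have "p + j + (g0 - (l - 1)) \<le> p + g0 + 0" using False by simp
    ultimately have "vanishes_below (G p * ?Y2 j p) (p + j + (g0 - (l - 1)))"
      by (rule vanishes_below_mono)
    then show ?thesis by (simp add: pdo_mult_fn_left)
  qed
  let ?Y4 = "pdo_mult pdo_Dinv ?Y3"
  have Y4: "vanishes_below (?Y4 r p) (p + r + (g0 - (l - 1)))" for r p
    by (rule vanishes_below_pdo_mult_plus[OF Dc Y3])
  have "vanishes_below (pdo_mult pdo_Gamma ?Y4 (-1) n) (n + -1 + (g0 - (l - 1)))"
    by (rule vanishes_below_pdo_mult_plus[OF pdo_fps_coeffs_Gamma Y4])
  then show ?thesis by (simp add: pdo_res_def algebra_simps)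
qed

lemma is_sep_vanishes_below_minus:
  fixes L :: "'a::comm_ring_1 pdo" and F G S :: "'a fls fn"
  assumes "is_derivation (dt 1)" and sep: "is_sep dt 1 L F G S"
    and "pdo_order_le L l" "0 \<le> l"
    and "\<And>n. vanishes_below (F n) (c - n)" "\<And>n. vanishes_below (G n) 0"
  shows "vanishes_below (S n) (c - l - 1 - n)"
proof (rule vanishes_below_of_tder)
  show "dt 1 0 = 0"
    using assms(1) by (rule derivation.zero[OF derivation.intro])
  show "vanishes_below (tder dt 1 1 S n) (c - l - 1 - n)"
    unfolding sep[unfolded is_sep_def, THEN conjunct2, rule_format, OF order_refl]
    by (rule vanishes_below_sep_rhs_minus[OF assms(3-)])
qed simp

lemma is_sep_vanishes_below_plus:
  fixes L :: "'a::comm_ring_1 pdo" and G S :: "'a fls fn"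
  assumes "is_derivation (dt 1)" and sep: "is_sep dt (-1) L (\<lambda>n. fls_const (phi n)) G S"
    and "pdo_order_le L l" "\<And>n. vanishes_below (G n) (n + g)"
  shows "vanishes_below (S n) (n + g - l)"
proof (rule vanishes_below_of_tder)
  show "dt 1 0 = 0"
    using assms(1) by (rule derivation.zero[OF derivation.intro])
  show "vanishes_below (tder dt (-1) 1 S n) (n + g - l)"
    unfolding sep[unfolded is_sep_def, THEN conjunct2, rule_format, OF order_refl]
    by (rule vanishes_below_sep_rhs_plus[OF assms(3,4)])
qed simp

lemma fls_const_diff: "fls_const (a - b) = fls_const a - (fls_const b :: 'a::ab_group_add fls)"
  by (rule fls_eqI) simp

section \<open>Adjoint action\<close>

definition adj_coeff :: "('a::comm_ring_1) pdo \<Rightarrow> int \<Rightarrow> int \<Rightarrow> 'a" where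
  "adj_coeff P n m = fsum (\<lambda>(j::int, i::nat).
       if int i - j = m then of_int (ibinom j i) * fdiffs i (P j) (n - j + int i) else 0)"

definition adj_coeff_term :: "('a::comm_ring_1) pdo \<Rightarrow> int \<Rightarrow> int \<Rightarrow> int \<Rightarrow> 'a" where
  "adj_coeff_term P n m j =
    (if 0 \<le> m + j then of_int (ibinom j (nat (m + j))) * fdiffs (nat (m + j)) (P j) (n + m) else 0)"

lemma adj_exp_apply_eq_adj_coeff: "adj_exp_apply P n = Abs_fls (adj_coeff P n) * qpow (- n)"
  by (simp add: adj_exp_apply_def adj_coeff_def[abs_def])

lemma fdiffs_order_le_eq_0: "pdo_order_le P b \<Longrightarrow> b < j \<Longrightarrow> fdiffs i (P j) p = 0"
proof -
  assume "pdo_order_le P b" "b < j"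
  then have "P j = (\<lambda>n. 0)" by (rule pdo_order_le_coeff_eq_0)
  then show ?thesis by (simp add: fdiffs_zero_fun)
qed

lemma finite_support_adj_coeff_term: "pdo_order_le P b \<Longrightarrow> finite_support (adj_coeff_term P n m)"
proof (rule finite_support_int_interval[of _ "- m" b])
  fix j assume P: "pdo_order_le P b" and h: "adj_coeff_term P n m j \<noteq> 0"
  then have "0 \<le> m + j" by (simp add: adj_coeff_term_def split: if_splits)
  moreover have "fdiffs (nat (m + j)) (P j) (n + m) \<noteq> 0"
    using h by (auto simp: adj_coeff_term_def split: if_splits)
  then have "\<not> b < j" using fdiffs_order_le_eq_0[OF P, of j "nat (m + j)" "n + m"] by auto
  ultimately show "- m \<le> j \<and> j \<le> b" by simp
qed

lemma adj_coeff_eq_fsum: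
  fixes P :: "('a::comm_ring_1) pdo"
  assumes P: "pdo_order_le P b"
  shows "adj_coeff P n m = fsum (adj_coeff_term P n m)"
proof -
  let ?F = "\<lambda>(j::int) (i::nat).
    if int i - j = m then of_int (ibinom j i) * fdiffs i (P j) (n - j + int i) else (0::'a)"
  have fin2: "finite_support (\<lambda>(j,i). ?F j i)"
  proof (rule finite_support_prod[of "{- m..b}" "{..nat (m + b)}"])
    fix j i assume h: "?F j i \<noteq> 0"
    then have e: "int i - j = m" by (simp split: if_splits)
    from h have "fdiffs i (P j) (n - j + int i) \<noteq> 0" by (auto split: if_splits)
    then have "\<not> b < j" using fdiffs_order_le_eq_0[OF P, of j i] by auto
    then show "j \<in> {- m..b} \<and> i \<in> {..nat (m + b)}" using e by auto
  qed auto
  have "adj_coeff P n m = fsum (\<lambda>j. fsum (\<lambda>i. ?F j i))"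
    unfolding adj_coeff_def by (rule fsum_prod[OF fin2])
  also have "\<dots> = fsum (adj_coeff_term P n m)"
  proof (rule fsum_cong)
    fix j
    show "fsum (\<lambda>i. ?F j i) = adj_coeff_term P n m j"
    proof (cases "0 \<le> m + j")
      case True
      have "fsum (\<lambda>i. ?F j i) = ?F j (nat (m + j))"
        by (rule fsum_single_support) auto
      then show ?thesis using True by (simp add: adj_coeff_term_def)
    next
      case False
      then have "?F j i = 0" for i by auto
      then show ?thesis using False by (simp add: adj_coeff_term_def)
    qed
  qed
  finally show ?thesis .
qed

lemma adj_coeff_eq_0: "pdo_order_le P b \<Longrightarrow> m < - b \<Longrightarrow> adj_coeff P n m = 0"
proof -
  assume P: "pdo_order_le P b" and m: "m < - b"
  have "adj_coeff_term P n m j = 0" for j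
  proof (cases "b < j")
    case True then show ?thesis by (simp add: adj_coeff_term_def fdiffs_order_le_eq_0[OF P])
  next
    case False then show ?thesis using m by (simp add: adj_coeff_term_def)
  qed
  then have "adj_coeff_term P n m = (\<lambda>j. 0)" by (intro ext)
  then show ?thesis by (simp add: adj_coeff_eq_fsum[OF P])
qed

lemma adj_coeff_nth: "pdo_order_le P b \<Longrightarrow> Abs_fls (adj_coeff P n) $$ m = adj_coeff P n m"
  by (rule nth_Abs_fls_lower_bound[of "- b"]) (auto simp: adj_coeff_eq_0)

lemma vanishes_below_adj_exp_apply: "pdo_order_le P b \<Longrightarrow> vanishes_below (adj_exp_apply P n) (n - b)"
proof -
  assume P: "pdo_order_le P b"
  have "vanishes_below (Abs_fls (adj_coeff P n)) (- b)"
    by (simp add: vanishes_below_def adj_coeff_nth[OF P] adj_coeff_eq_0[OF P])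
  from vanishes_below_mult[OF this vanishes_below_qpow[of "- n"]] show ?thesis
    by (simp add: adj_exp_apply_eq_adj_coeff)
qed

lemma adj_coeff_term_add:
  "adj_coeff_term (\<lambda>j n. P j n + Q j n) n m j = adj_coeff_term P n m j + adj_coeff_term Q n m j"
  by (simp add: adj_coeff_term_def fdiffs_add distrib_left)

lemma adj_coeff_term_neg: "adj_coeff_term (\<lambda>j n. - P j n) n m j = - adj_coeff_term P n m j"
  by (simp add: adj_coeff_term_def fdiffs_neg)

lemma adj_exp_apply_add:
  fixes P Q :: "('a::comm_ring_1) pdo"
  assumes P: "pdo_order_le P b" and Q: "pdo_order_le Q b"
  shows "adj_exp_apply (\<lambda>j n. P j n + Q j n) n = adj_exp_apply P n + adj_exp_apply Q n"
proof -
  have PQ: "pdo_order_le (\<lambda>j n. P j n + Q j n) b" by (rule pdo_order_le_add[OF P Q])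
  have co: "adj_coeff (\<lambda>j n. P j n + Q j n) n m = adj_coeff P n m + adj_coeff Q n m" for m
  proof -
    show ?thesis
      unfolding adj_coeff_eq_fsum[OF PQ] adj_coeff_eq_fsum[OF P] adj_coeff_eq_fsum[OF Q] adj_coeff_term_add
      by (rule fsum_add[OF finite_support_adj_coeff_term[OF P] finite_support_adj_coeff_term[OF Q]])
  qed
  have "Abs_fls (adj_coeff (\<lambda>j n. P j n + Q j n) n) = Abs_fls (adj_coeff P n) + Abs_fls (adj_coeff Q n)"
    by (rule fls_eqI) (simp add: adj_coeff_nth[OF P] adj_coeff_nth[OF Q] adj_coeff_nth[OF PQ] co)
  then show ?thesis by (simp add: adj_exp_apply_eq_adj_coeff distrib_right)
qed

lemma adj_exp_apply_neg:
  fixes P :: "('a::comm_ring_1) pdo"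
  assumes P: "pdo_order_le P b"
  shows "adj_exp_apply (\<lambda>j n. - P j n) n = - adj_exp_apply P n"
proof -
  have P': "pdo_order_le (\<lambda>j n. - P j n) b" by (rule pdo_order_le_neg[OF P])
  have co: "adj_coeff (\<lambda>j n. - P j n) n m = - adj_coeff P n m" for m
  proof -
    have "adj_coeff (\<lambda>j n. - P j n) n m = fsum (\<lambda>j. - adj_coeff_term P n m j)"
      unfolding adj_coeff_eq_fsum[OF P'] by (rule fsum_cong) (rule adj_coeff_term_neg)
    then show ?thesis unfolding adj_coeff_eq_fsum[OF P] by (simp add: fsum_neg)
  qed
  have "Abs_fls (adj_coeff (\<lambda>j n. - P j n) n) = - Abs_fls (adj_coeff P n)"
    by (rule fls_eqI) (simp add: adj_coeff_nth[OF P] adj_coeff_nth[OF P'] co)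
  then show ?thesis by (simp add: adj_exp_apply_eq_adj_coeff)
qed

lemma adj_exp_apply_zero: "adj_exp_apply (\<lambda>j n. 0) n = (0 :: 'a::comm_ring_1 fls)"
proof -
  have "adj_coeff (\<lambda>j n. 0 :: 'a) n = (\<lambda>m. 0)"
    by (intro ext) (simp add: adj_coeff_def fdiffs_zero_fun fsum_def case_prod_unfold)
  moreover have "Abs_fls (\<lambda>m. 0 :: 'a) = 0"
    by (rule fls_eqI) (subst nth_Abs_fls_lower_bound[of 0]; simp)
  ultimately show ?thesis by (simp add: adj_exp_apply_eq_adj_coeff)
qed

lemma adj_exp_apply_sum:
  fixes P :: "'i \<Rightarrow> ('a::comm_ring_1) pdo"
  assumes I: "finite I" and P: "\<And>i. i \<in> I \<Longrightarrow> pdo_order_le (P i) b"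
  shows "adj_exp_apply (\<lambda>j n. \<Sum>i\<in>I. P i j n) n = (\<Sum>i\<in>I. adj_exp_apply (P i) n)"
  using I P
proof (induction I rule: finite_induct)
  case empty then show ?case by (simp add: adj_exp_apply_zero)
next
  case (insert x I)
  have "adj_exp_apply (\<lambda>j n. \<Sum>i\<in>insert x I. P i j n) n = adj_exp_apply (\<lambda>j n. P x j n + (\<Sum>i\<in>I. P i j n)) n"
    using insert by simp
  also have "\<dots> = adj_exp_apply (P x) n + adj_exp_apply (\<lambda>j n. \<Sum>i\<in>I. P i j n) n"
    by (rule adj_exp_apply_add) (use insert in \<open>auto intro: pdo_order_le_sum\<close>)
  finally show ?case using insert by simp
qed

lemma (in derivation) cmap_adj_exp_apply:
  assumes P: "pdo_order_le P b"
  shows "fls_cmap D (adj_exp_apply P n) = adj_exp_apply (pdo_map D P) n"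
proof -
  have P': "pdo_order_le (pdo_map D P) b" by (rule pdo_order_le_map[of P b D, OF P zero])
  have "fls_cmap D (Abs_fls (adj_coeff P n)) = Abs_fls (adj_coeff (pdo_map D P) n)"
  proof (rule fls_eqI)
    fix m
    have "D (fsum (adj_coeff_term P n m)) = fsum (\<lambda>j. D (adj_coeff_term P n m j))"
      by (rule fsum[OF finite_support_adj_coeff_term[OF P]])
    also have "\<dots> = fsum (adj_coeff_term (pdo_map D P) n m)"
      by (rule fsum_cong) (simp add: adj_coeff_term_def of_int_mult fdiffs pdo_map_def)
    finally show "fls_cmap D (Abs_fls (adj_coeff P n)) $$ m = Abs_fls (adj_coeff (pdo_map D P) n) $$ m"
      by (simp add: fls_cmap_nth[of D, OF zero] adj_coeff_nth[OF P] adj_coeff_nth[OF P']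
          adj_coeff_eq_fsum[OF P] adj_coeff_eq_fsum[OF P'])
  qed
  then show ?thesis
    unfolding adj_exp_apply_eq_adj_coeff by (simp add: cmap_mult_coeffs_const[OF coeffs_const_qpow])
qed

lemma adj_coeff_term_shift:
  "adj_coeff_term (\<lambda>j n. P (j - 1) n) n m (j + 1) =
    adj_coeff_term P (n - 1) m j + adj_coeff_term P (n - 1) (m + 1) j - adj_coeff_term P n m j"
proof -
  consider "m + j < -1" | "m + j = -1" | "0 \<le> m + j" by linarith
  then show ?thesis
  proof cases
    case 1 then show ?thesis by (simp add: adj_coeff_term_def)
  next
    case 2 then show ?thesis by (simp add: adj_coeff_term_def algebra_simps)
  next
    case 3
    define t where "t = nat (m + j)"
    have mj: "m + j = int t" using 3 by (simp add: t_def)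
    have mj2: "m + 1 + j = int (Suc t)" using 3 by (simp add: t_def)
    have mj3: "m + (j + 1) = int (Suc t)" using 3 by (simp add: t_def)
    have a1: "adj_coeff_term P (n - 1) m j = of_int (ibinom j t) * fdiffs t (P j) (n - 1 + m)"
      by (simp add: adj_coeff_term_def mj)
    have a2: "adj_coeff_term P (n - 1) (m + 1) j =
        of_int (ibinom j (Suc t)) * fdiffs (Suc t) (P j) (n - 1 + (m + 1))"
      by (simp only: adj_coeff_term_def mj2 nat_int) simp
    have a3: "adj_coeff_term P n m j = of_int (ibinom j t) * fdiffs t (P j) (n + m)"
      by (simp add: adj_coeff_term_def mj)
    have a0: "adj_coeff_term (\<lambda>j n. P (j - 1) n) n m (j + 1) =
        of_int (ibinom (j + 1) (Suc t)) * fdiffs (Suc t) (P j) (n + m)"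
      by (simp only: adj_coeff_term_def mj3 nat_int) simp
    have p1: "n - 1 + (m + 1) = n + m" "n - 1 + m = n + m - 1" by simp_all
    have fs: "fdiffs (Suc t) (P j) (n + m) = fdiffs t (P j) (n + m - 1) - fdiffs t (P j) (n + m)"
      by simp
    show ?thesis unfolding a0 a1 a2 a3 p1 ibinom_Pascal fs by (simp add: algebra_simps)
  qed
qed

lemma adj_exp_apply_mult_Delta:
  fixes P :: "('a::comm_ring_1) pdo"
  assumes P: "pdo_order_le P b"
  shows "adj_exp_apply (pdo_mult P pdo_Delta) n = adj_exp_apply P (n - 1) - adj_exp_apply P n"
proof -
  have e: "pdo_mult P pdo_Delta = (\<lambda>j n. P (j - 1) n)"
    by (intro ext) (simp add: pdo_Delta_eq_Dpow pdo_mult_Dpow_right)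
  have P1: "pdo_order_le (\<lambda>j n. P (j - 1) n) (b + 1)" using P by (simp add: pdo_order_le_def)
  have co: "adj_coeff (\<lambda>j n. P (j - 1) n) n m =
      adj_coeff P (n - 1) m + adj_coeff P (n - 1) (m + 1) - adj_coeff P n m" for m
  proof -
    have fin: "finite_support (adj_coeff_term P k m')" for k m'
      by (rule finite_support_adj_coeff_term[OF P])
    have "adj_coeff (\<lambda>j n. P (j - 1) n) n m = fsum (\<lambda>j. adj_coeff_term (\<lambda>j n. P (j - 1) n) n m (j + 1))"
      unfolding adj_coeff_eq_fsum[OF P1] by (rule fsum_shift_int[symmetric])
    also have "\<dots> = adj_coeff P (n - 1) m + adj_coeff P (n - 1) (m + 1) - adj_coeff P n m"
      unfolding adj_coeff_term_shift adj_coeff_eq_fsum[OF P]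
      by (simp add: fsum_diff fsum_add finite_support_add fin)
    finally show ?thesis .
  qed
  have H: "Abs_fls (adj_coeff (\<lambda>j n. P (j - 1) n) n) =
      (1 + fls_X_inv) * Abs_fls (adj_coeff P (n - 1)) - Abs_fls (adj_coeff P n)"
    by (rule fls_eqI)
       (simp add: adj_coeff_nth[OF P] adj_coeff_nth[OF P1] co distrib_right fls_X_inv_times_nth algebra_simps)
  have Q: "qpow (- (n - 1)) = (1 + fls_X_inv) * (qpow (- n) :: 'a fls)"
    using qpow_Suc[of "- n"] by simp
  have "Abs_fls (adj_coeff (\<lambda>j n. P (j - 1) n) n) * qpow (- n) =
      Abs_fls (adj_coeff P (n - 1)) * qpow (- (n - 1)) - Abs_fls (adj_coeff P n) * qpow (- n)"
    unfolding H Q by (simp add: algebra_simps)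
  then show ?thesis unfolding e adj_exp_apply_eq_adj_coeff .
qed

definition adj_fn_defect :: "('a::comm_ring_1) pdo \<Rightarrow> 'a fn \<Rightarrow> int \<Rightarrow> 'a fls" where
  "adj_fn_defect P psi n = adj_exp_apply (pdo_mult P (pdo_fn psi)) n - fls_const (psi n) * adj_exp_apply P n"

definition pdo_monom :: "('a::zero) fn \<Rightarrow> int \<Rightarrow> 'a pdo" where
  "pdo_monom g j = (\<lambda>k n. if k = j then g n else 0)"

lemma pdo_order_le_monom: "pdo_order_le (pdo_monom g j) j"
  by (simp add: pdo_order_le_def pdo_monom_def)

lemma pdo_monom_mult_Delta: "pdo_mult (pdo_monom g j) pdo_Delta = pdo_monom (g::'a::comm_ring_1 fn) (j + 1)"
  by (intro ext) (simp add: pdo_Delta_eq_Dpow pdo_mult_Dpow_right pdo_monom_def)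

lemma pdo_monom_0: "pdo_monom g 0 = pdo_fn g" by (simp add: pdo_monom_def pdo_fn_def)

lemma adj_exp_apply_fn: "adj_exp_apply (pdo_fn (h::'a::comm_ring_1 fn)) n = fls_const (h n) * qpow (- n)"
proof -
  have co: "adj_coeff (pdo_fn h) n m = (if m = 0 then h n else 0)" for m
  proof -
    have "adj_coeff (pdo_fn h) n m = adj_coeff_term (pdo_fn h) n m 0"
      unfolding adj_coeff_eq_fsum[OF pdo_order_le_fn]
      by (rule fsum_single_support) (simp add: adj_coeff_term_def pdo_fn_def fdiffs_zero_fun)
    also have "\<dots> = (if m = 0 then h n else 0)"
      by (cases "0 \<le> m") (auto simp: adj_coeff_term_def pdo_fn_def ibinom_0_left)
    finally show ?thesis .
  qed
  have "Abs_fls (adj_coeff (pdo_fn h) n) = fls_const (h n)"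
    by (rule fls_eqI) (simp add: adj_coeff_nth[OF pdo_order_le_fn] co)
  then show ?thesis by (simp add: adj_exp_apply_eq_adj_coeff)
qed

lemma adj_fn_defect_fn: "adj_fn_defect (pdo_fn g) psi n = (0 :: 'a::comm_ring_1 fls)"
proof -
  have "pdo_mult (pdo_fn g) (pdo_fn psi) = pdo_fn (\<lambda>n. g n * psi n)"
    by (intro ext) (simp only: pdo_mult_fn_left, simp add: pdo_fn_def)
  then show ?thesis by (simp add: adj_fn_defect_def adj_exp_apply_fn algebra_simps)
qed

lemma vanishes_below_adj_fn_defect:
  fixes A :: "('a::comm_ring_1) pdo"
  assumes "pdo_order_le A a"
  shows "vanishes_below (adj_fn_defect A psi n) (n - a)"
proof -
  have w: "pdo_order_le (pdo_mult A (pdo_fn psi)) (a + 0)"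
    by (rule pdo_order_le_mult[OF assms pdo_order_le_fn])
  have l1: "vanishes_below (adj_exp_apply (pdo_mult A (pdo_fn psi)) n) (n - a)"
    using vanishes_below_adj_exp_apply[OF w, of n] by simp
  have l2: "vanishes_below (fls_const (psi n) * adj_exp_apply A n) (n - a)"
    using vanishes_below_mult[OF vanishes_below_const vanishes_below_adj_exp_apply[OF assms]] by simp
  show ?thesis unfolding adj_fn_defect_def by (rule vanishes_below_diff[OF l1 l2])
qed

lemma adj_fn_defect_add:
  fixes A B :: "('a::comm_ring_1) pdo"
  assumes A: "pdo_order_le A a" and B: "pdo_order_le B a"
  shows "adj_fn_defect (\<lambda>j n. A j n + B j n) psi n = adj_fn_defect A psi n + adj_fn_defect B psi n"
proof -
  have wA: "pdo_order_le (pdo_mult A (pdo_fn psi)) a"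
    using pdo_order_le_mult[OF A pdo_order_le_fn] by simp
  have wB: "pdo_order_le (pdo_mult B (pdo_fn psi)) a"
    using pdo_order_le_mult[OF B pdo_order_le_fn] by simp
  show ?thesis
    unfolding adj_fn_defect_def pdo_mult_add_left[OF A B pdo_order_le_fn] adj_exp_apply_add[OF wA wB]
      adj_exp_apply_add[OF A B]
    by (simp add: algebra_simps)
qed

lemma adj_fn_defect_zero: "adj_fn_defect (\<lambda>j n. 0) psi n = (0 :: 'a::comm_ring_1 fls)"
  by (simp add: adj_fn_defect_def pdo_mult_zero_left adj_exp_apply_zero)

lemma adj_fn_defect_sum:
  fixes A :: "'i \<Rightarrow> ('a::comm_ring_1) pdo"
  assumes I: "finite I" and A: "\<And>i. i \<in> I \<Longrightarrow> pdo_order_le (A i) a"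
  shows "adj_fn_defect (\<lambda>j n. \<Sum>i\<in>I. A i j n) psi n = (\<Sum>i\<in>I. adj_fn_defect (A i) psi n)"
  using I A
proof (induction I rule: finite_induct)
  case empty then show ?case by (simp add: adj_fn_defect_zero)
next
  case (insert x I)
  have "adj_fn_defect (\<lambda>j n. \<Sum>i\<in>insert x I. A i j n) psi n =
      adj_fn_defect (\<lambda>j n. A x j n + (\<Sum>i\<in>I. A i j n)) psi n"
    using insert by simp
  also have "\<dots> = adj_fn_defect (A x) psi n + adj_fn_defect (\<lambda>j n. \<Sum>i\<in>I. A i j n) psi n"
    by (rule adj_fn_defect_add) (use insert in \<open>auto intro: pdo_order_le_sum\<close>)
  finally show ?case using insert by simp
qed

lemma adj_fn_defect_mult_Delta:
  fixes P :: "('a::comm_ring_1) pdo"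
  assumes P: "pdo_order_le P b"
  shows "adj_fn_defect (pdo_mult P pdo_Delta) psi n =
    adj_fn_defect P (shf 1 psi) (n - 1) - adj_fn_defect P (shf 1 psi) n + adj_fn_defect P (fdiff 1 psi) n"
proof -
  let ?G = "pdo_mult P (pdo_fn (shf 1 psi))" and ?H = "pdo_mult P (pdo_fn (fdiff 1 psi))"
  have D1: "pdo_order_le (pdo_Delta :: 'a pdo) 1" by (simp add: pdo_Delta_eq_Dpow pdo_order_le_Dpow)
  have G1: "pdo_order_le (pdo_mult (pdo_fn (shf 1 psi)) pdo_Delta) 1"
    using pdo_order_le_mult[OF pdo_order_le_fn D1] by simp
  have H1: "pdo_order_le (pdo_fn (fdiff 1 psi)) 1"
    by (rule pdo_order_le_mono[OF pdo_order_le_fn]) simp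
  have G: "pdo_order_le ?G b"
    using pdo_order_le_mult[OF P pdo_order_le_fn] by simp
  have GD: "pdo_order_le (pdo_mult ?G pdo_Delta) (b + 1)"
    by (rule pdo_order_le_mult[OF G D1])
  have H: "pdo_order_le ?H (b + 1)"
    using pdo_order_le_mult[OF P H1] by simp
  have "pdo_mult (pdo_mult P pdo_Delta) (pdo_fn psi) = pdo_mult P (pdo_mult pdo_Delta (pdo_fn psi))"
    by (rule pdo_mult_assoc[OF P D1 pdo_order_le_fn])
  also have "\<dots> = (\<lambda>r n. pdo_mult P (pdo_mult (pdo_fn (shf 1 psi)) pdo_Delta) r n + ?H r n)"
    unfolding pdo_Delta_mult_fn by (rule pdo_mult_add_right[OF P G1 H1])
  also have "pdo_mult P (pdo_mult (pdo_fn (shf 1 psi)) pdo_Delta) = pdo_mult ?G pdo_Delta"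
    by (rule pdo_mult_assoc[OF P pdo_order_le_fn D1, symmetric])
  finally have "pdo_mult (pdo_mult P pdo_Delta) (pdo_fn psi) = (\<lambda>r n. pdo_mult ?G pdo_Delta r n + ?H r n)" .
  then have "adj_exp_apply (pdo_mult (pdo_mult P pdo_Delta) (pdo_fn psi)) n =
      adj_exp_apply ?G (n - 1) - adj_exp_apply ?G n + adj_exp_apply ?H n"
    unfolding adj_exp_apply_add[OF GD H, symmetric] adj_exp_apply_mult_Delta[OF G, symmetric] by simp
  moreover have "shf 1 psi (n - 1) = psi n" "shf 1 psi n = psi (n + 1)"
    "fdiff 1 psi n = psi (n + 1) - psi n"
    by (simp_all add: shf_def)
  ultimately show ?thesis
    by (simp add: adj_fn_defect_def adj_exp_apply_mult_Delta[OF P] fls_const_diff algebra_simps)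
qed

lemma eq_0_if_vanishes_below_step:
  fixes E :: "'b \<Rightarrow> int \<Rightarrow> 'a::ab_group_add fls"
  assumes step: "\<And>h n. \<exists>h1 h2. E h n = E h1 (n + 1) - E h2 (n + 1)"
    and bound: "\<And>h n. vanishes_below (E h n) (n + c)"
  shows "E h n = 0"
proof -
  have bound_d: "vanishes_below (E h n) (n + c + int d)" for d h n
  proof (induction d arbitrary: h n)
    case 0
    then show ?case using bound by simp
  next
    case (Suc d)
    obtain h1 h2 where E: "E h n = E h1 (n + 1) - E h2 (n + 1)" using step by blast
    have "vanishes_below (E h' (n + 1)) (n + c + int (Suc d))" for h'
      using Suc[of h' "n + 1"] by (simp add: algebra_simps)
    from this[of h1] this[of h2] show ?case unfolding E by (rule vanishes_below_diff)
  qed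
  show ?thesis
  proof (rule fls_eqI)
    fix m
    show "E h n $$ m = 0 $$ m"
      using bound_d[where d = "nat (m - n - c + 1)" and h = h and n = n] by (simp add: vanishes_below_def)
  qed
qed

lemma adj_fn_defect_monom: "adj_fn_defect (pdo_monom g j) psi n = (0 :: 'a::comm_ring_1 fls)"
proof (induction j arbitrary: g psi n rule: int_induct[where k = 0])
  case base
  show ?case by (simp add: pdo_monom_0 adj_fn_defect_fn)
next
  case (step1 j)
  have "adj_fn_defect (pdo_monom g (j + 1)) psi n = adj_fn_defect (pdo_mult (pdo_monom g j) pdo_Delta) psi n"
    by (simp add: pdo_monom_mult_Delta)
  also have "\<dots> = 0" by (simp add: adj_fn_defect_mult_Delta[OF pdo_order_le_monom] step1)
  finally show ?case .
next
  case (step2 j)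
  let ?P = "pdo_monom g (j - 1)"
  \<comment> \<open>Here \<open>\<Delta>\<close> only expresses the defect at \<open>n\<close> through defects at \<open>n + 1\<close>; each such
    step raises the order bound by one.\<close>
  show ?case
  proof (rule eq_0_if_vanishes_below_step[where E = "adj_fn_defect ?P"])
    fix h :: "'a fn" and k
    have "shf 1 (shf (-1) h) = h" by (simp add: shf_def)
    moreover have "adj_fn_defect (pdo_mult ?P pdo_Delta) (shf (-1) h) (k + 1) = 0"
      using pdo_monom_mult_Delta[of g "j - 1"] step2 by simp
    ultimately have "adj_fn_defect ?P h k =
        adj_fn_defect ?P h (k + 1) - adj_fn_defect ?P (fdiff 1 (shf (-1) h)) (k + 1)"
      using adj_fn_defect_mult_Delta[OF pdo_order_le_monom, of g "j - 1" "shf (-1) h" "k + 1"]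
      by (simp add: algebra_simps)
    then show "\<exists>h1 h2. adj_fn_defect ?P h k = adj_fn_defect ?P h1 (k + 1) - adj_fn_defect ?P h2 (k + 1)"
      by blast
  next
    fix h :: "'a fn" and k
    show "vanishes_below (adj_fn_defect ?P h k) (k + (1 - j))"
      using vanishes_below_adj_fn_defect[OF pdo_order_le_monom[of g "j - 1"], of h k]
      by (simp add: algebra_simps)
  qed
qed

lemma pdo_split_monoms:
  assumes "pdo_order_le P b"
  shows "P = (\<lambda>j n. (\<Sum>i\<in>{c..b}. pdo_monom (P i) i j n) + (if c \<le> j then 0 else P j n))"
proof (intro ext)
  fix j n
  have "(\<Sum>i\<in>{c..b}. pdo_monom (P i) i j n) = (if c \<le> j \<and> j \<le> b then P j n else 0)"
    by (simp add: pdo_monom_def sum.delta)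
  then show "P j n = (\<Sum>i\<in>{c..b}. pdo_monom (P i) i j n) + (if c \<le> j then 0 else P j n)"
    using pdo_order_leD[OF assms] by auto
qed

text \<open>The defect vanishes on each monomial,
  and the remaining low-order tail has a defect of arbitrarily high order in \<open>\<lambda>\<^sup>-\<^sup>1\<close>.\<close>

lemma adj_exp_apply_mult_fn:
  fixes P :: "('a::comm_ring_1) pdo"
  assumes P: "pdo_order_le P b"
  shows "adj_exp_apply (pdo_mult P (pdo_fn psi)) n = fls_const (psi n) * adj_exp_apply P n"
proof -
  have "adj_fn_defect P psi n $$ m = 0" for m
  proof -
    define c where "c = min 0 (n - m)"
    define Tail where "Tail j k = (if c \<le> j then 0 else P j k)" for j k
    have Tail: "pdo_order_le Tail b" "pdo_order_le Tail (c - 1)"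
      using P by (auto simp: Tail_def pdo_order_le_def)
    have monoms: "pdo_order_le (\<lambda>j k. \<Sum>i\<in>{c..b}. pdo_monom (P i) i j k) b"
      by (intro pdo_order_le_sum pdo_order_le_mono[OF pdo_order_le_monom]) simp
    have "P = (\<lambda>j k. (\<Sum>i\<in>{c..b}. pdo_monom (P i) i j k) + Tail j k)"
      using pdo_split_monoms[OF P, of c] by (simp add: Tail_def)
    then have "adj_fn_defect P psi n =
        adj_fn_defect (\<lambda>j k. \<Sum>i\<in>{c..b}. pdo_monom (P i) i j k) psi n + adj_fn_defect Tail psi n"
      using adj_fn_defect_add[OF monoms Tail(1)] by simp
    also have "adj_fn_defect (\<lambda>j k. \<Sum>i\<in>{c..b}. pdo_monom (P i) i j k) psi n = 0"
      by (subst adj_fn_defect_sum)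
         (auto intro: pdo_order_le_mono[OF pdo_order_le_monom] simp: adj_fn_defect_monom)
    finally have "adj_fn_defect P psi n = adj_fn_defect Tail psi n" by simp
    moreover have "vanishes_below (adj_fn_defect Tail psi n) (n - (c - 1))"
      by (rule vanishes_below_adj_fn_defect[OF Tail(2)])
    ultimately show ?thesis by (simp add: vanishes_below_def c_def)
  qed
  then show ?thesis by (simp add: adj_fn_defect_def fls_eq_iff)
qed

lemma wave_adj_eq_adj_exp_apply:
  "wave_adj Zi = adj_exp_apply (pdo_shift (-1) (pdo_mult Zi pdo_Dinv))"
proof -
  have "(\<lambda>j. shf (-1) (Zi (j + 1))) = pdo_shift (-1) (pdo_mult Zi pdo_Dinv)"
    by (intro ext) (simp add: pdo_shift_def shf_def pdo_Dinv_eq_Dpow pdo_mult_Dpow_right)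
  then show ?thesis by (simp add: wave_adj_def)
qed

lemma pdo_order_le_shift_Dinv:
  "pdo_order_le P b \<Longrightarrow> pdo_order_le (pdo_shift (-1) (pdo_mult P pdo_Dinv)) (b - 1)"
  unfolding pdo_Dinv_eq_Dpow
  by (intro pdo_order_le_shift pdo_order_le_mult[where b = "-1", simplified] pdo_order_le_Dpow)

lemma adj_exp_apply_shift_Dinv_diff:
  fixes P :: "'a::comm_ring_1 pdo"
  defines "Q \<equiv> pdo_shift (-1) (pdo_mult P pdo_Dinv)"
  assumes P: "pdo_order_le P b"
  shows "adj_exp_apply Q (n + 1) - adj_exp_apply Q n = - adj_exp_apply (pdo_shift (-1) P) (n + 1)"
proof -
  have Q: "pdo_order_le Q (b - 1)"
    unfolding Q_def by (rule pdo_order_le_shift_Dinv[OF P])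
  have "pdo_mult Q pdo_Delta = pdo_shift (-1) P"
    by (intro ext) (simp add: Q_def pdo_shift_def pdo_Delta_eq_Dpow pdo_Dinv_eq_Dpow pdo_mult_Dpow_right)
  then show ?thesis
    using adj_exp_apply_mult_Delta[OF Q, of "n + 1"] by simp
qed

section \<open>The squared eigenfunction symmetry flow\<close>

lemma is_sep_wave_eq:
  fixes Z L :: "'a::comm_ring_1 pdo" and psi :: "'a fn" and S :: "'a fls fn"
  assumes der_t1: "is_derivation (dt 1)" and Z: "pdo_order_le Z 0"
    and L: "pdo_order_le L l" and l: "0 \<le> l"
    and sep: "is_sep dt 1 L (wave Z) (\<lambda>n. fls_const (fdiff 1 psi n)) S"
  shows "S n = fls_const (psi n) * wave Z n
    - wave (pdo_mult pdo_Dinv (pdo_mult (pdo_fn (shf 1 psi)) (pdo_mult pdo_Delta Z))) n"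
    (is "_ = ?W n")
proof (rule eq_if_diff_eq[where \<beta> = "\<lambda>n. - l - 1 - n"])
  define V where "V = pdo_mult pdo_Dinv (pdo_mult (pdo_fn (shf 1 psi)) (pdo_mult pdo_Delta Z))"
  have "pdo_order_le V (-1 + (0 + (1 + 0)))"
    unfolding V_def pdo_Dinv_eq_Dpow pdo_Delta_eq_Dpow
    by (intro pdo_order_le_mult pdo_order_le_Dpow pdo_order_le_fn Z)
  then have V: "pdo_order_le V 0" by simp
  fix n
  have "S (n + 1) - S n = wave Z n * fls_const (psi (n + 1) - psi n)"
    using sep by (simp add: is_sep_def)
  also have "\<dots> = (fls_const (psi (n + 1)) * wave Z (n + 1) - fls_const (psi n) * wave Z n)
      - fls_const (psi (n + 1)) * (wave Z (n + 1) - wave Z n)"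
    by (simp add: fls_const_diff algebra_simps)
  also have "fls_const (psi (n + 1)) * (wave Z (n + 1) - wave Z n) = wave V (n + 1) - wave V n"
    unfolding V_def wave_Dinv_fn_Delta_diff[OF Z] by (simp add: shf_def)
  finally show "S (n + 1) - S n = ?W (n + 1) - ?W n"
    unfolding V_def[symmetric] by (simp add: algebra_simps)
  show "vanishes_below (S n) (- l - 1 - n)"
    using is_sep_vanishes_below_minus[OF der_t1 sep L l, of 0] vanishes_below_wave[OF Z]
    by (simp add: vanishes_below_const)
  show "vanishes_below (?W n) (- l - 1 - n)"
    unfolding V_def[symmetric]
    by (rule vanishes_below_diff; rule vanishes_below_mono)
       (use vanishes_below_mult[OF vanishes_below_const vanishes_below_wave[OF Z]]
          vanishes_below_wave[OF V] l in auto)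
next
  show "\<exists>k. m < - l - 1 - k" for m
    by (rule exI[of _ "- l - 2 - m"]) simp
qed

lemma is_sep_wave_adj_eq:
  fixes Zi L :: "'a::comm_ring_1 pdo" and phi :: "'a fn" and T :: "'a fls fn"
  assumes der_t1: "is_derivation (dt 1)" and Zi: "pdo_order_le Zi zi"
    and L: "pdo_order_le L l" and l: "0 \<le> l"
    and sep: "is_sep dt (-1) L (\<lambda>n. fls_const (phi n)) (fdiff 1 (wave_adj Zi)) T"
  shows "T n = adj_exp_apply (pdo_shift (-1) (pdo_mult (pdo_mult Zi (pdo_fn phi)) pdo_Dinv)) n"
    (is "_ = ?R n")
proof (rule eq_if_diff_eq[where \<beta> = "\<lambda>n. n + 1 - zi - l"])
  define P where "P = pdo_mult Zi (pdo_fn phi)"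
  have P: "pdo_order_le P zi"
    using pdo_order_le_mult[OF Zi pdo_order_le_fn] by (simp add: P_def)
  fix n
  have "T (n + 1) - T n = fls_const (phi n) * (wave_adj Zi (n + 1) - wave_adj Zi n)"
    using sep by (simp add: is_sep_def)
  also have "\<dots> = - (fls_const (phi n) * adj_exp_apply (pdo_shift (-1) Zi) (n + 1))"
    unfolding wave_adj_eq_adj_exp_apply adj_exp_apply_shift_Dinv_diff[OF Zi] by simp
  also have "\<dots> = - adj_exp_apply (pdo_shift (-1) P) (n + 1)"
    using adj_exp_apply_mult_fn[OF pdo_order_le_shift[OF Zi], where psi = "\<lambda>k. phi (k - 1)" and n = "n + 1"]
    by (simp add: P_def pdo_shift_mult[symmetric] pdo_shift_fn)
  also have "\<dots> = ?R (n + 1) - ?R n"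
    unfolding P_def[symmetric] by (rule adj_exp_apply_shift_Dinv_diff[OF P, symmetric])
  finally show "T (n + 1) - T n = ?R (n + 1) - ?R n" .
  have w: "vanishes_below (wave_adj Zi k) (k - (zi - 1))" for k
    unfolding wave_adj_eq_adj_exp_apply
    by (rule vanishes_below_adj_exp_apply[OF pdo_order_le_shift_Dinv[OF Zi]])
  have "vanishes_below (fdiff 1 (wave_adj Zi) k) (k + (1 - zi))" for k
    using vanishes_below_diff[OF vanishes_below_mono[OF w[of "k + 1"]] w[of k]]
    by (simp add: algebra_simps)
  from is_sep_vanishes_below_plus[OF der_t1 sep L this, of n]
  show "vanishes_below (T n) (n + 1 - zi - l)" by (simp add: algebra_simps)
  show "vanishes_below (?R n) (n + 1 - zi - l)"
    unfolding P_def[symmetric]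
    by (rule vanishes_below_mono[OF vanishes_below_adj_exp_apply[OF pdo_order_le_shift_Dinv[OF P]]])
      (use l in simp)
next
  show "\<exists>k. m < k + 1 - zi - l" for m
    by (rule exI[of _ "m + zi + l"]) simp
qed

lemma wave_symmetry_flow:
  fixes dt :: "nat \<Rightarrow> 'a::comm_ring_1 \<Rightarrow> 'a" and da :: "'a \<Rightarrow> 'a"
    and Z Zi L :: "'a pdo" and phi psi :: "nat \<Rightarrow> 'a fn" and S :: "nat \<Rightarrow> 'a fls fn"
  assumes der_t1: "is_derivation (dt 1)" and der_a: "is_derivation da"
    and Z: "pdo_order_le Z 0" and Zi: "pdo_order_le Zi zi" and zi: "0 \<le> zi"
    and L_def: "L = pdo_mult Z (pdo_mult pdo_Delta Zi)"
    and flow_a: "pdo_map da Z = (\<lambda>j n. \<Sum>i<m.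
       pdo_mult (pdo_fn (phi i)) (pdo_mult pdo_Dinv
         (pdo_mult (pdo_fn (shf 1 (psi i))) (pdo_mult pdo_Delta Z))) j n)"
    and S_sep: "\<And>i. i < m \<Longrightarrow>
       is_sep dt 1 L (wave Z) (\<lambda>n. fls_const (fdiff 1 (psi i) n)) (S i)"
  shows "fls_cmap da (wave Z n) =
    (\<Sum>i<m. fls_const (phi i n) * (wave Z n * fls_const (psi i n) - S i n))"
proof -
  interpret da: derivation da by (rule derivation.intro[OF der_a])
  define V where "V i = pdo_mult pdo_Dinv (pdo_mult (pdo_fn (shf 1 (psi i))) (pdo_mult pdo_Delta Z))"
    for i
  have "pdo_order_le (V i) (-1 + (0 + (1 + 0)))" for i
    unfolding V_def pdo_Dinv_eq_Dpow pdo_Delta_eq_Dpow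
    by (intro pdo_order_le_mult pdo_order_le_Dpow pdo_order_le_fn Z)
  then have V: "pdo_order_le (V i) 0" for i by simp
  have "pdo_order_le L (0 + (1 + zi))"
    unfolding L_def pdo_Delta_eq_Dpow by (intro pdo_order_le_mult pdo_order_le_Dpow Z Zi)
  then have L: "pdo_order_le L (1 + zi)" by simp
  have "fls_cmap da (wave Z n) = wave (pdo_map da Z) n"
    by (rule da.cmap_wave[OF Z])
  also have "\<dots> = (\<Sum>i<m. fls_const (phi i n) * wave (V i) n)"
    unfolding flow_a V_def[symmetric]
    by (simp add: wave_sum[OF _ pdo_order_le_mult[OF pdo_order_le_fn V]] wave_fn_mult[OF V])
  also have "\<dots> = (\<Sum>i<m. fls_const (phi i n) * (wave Z n * fls_const (psi i n) - S i n))"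
  proof (rule sum.cong[OF refl])
    fix i assume "i \<in> {..<m}"
    then have S: "S i n = fls_const (psi i n) * wave Z n - wave (V i) n"
      unfolding V_def using is_sep_wave_eq[OF der_t1 Z L _ S_sep] zi by simp
    show "fls_const (phi i n) * wave (V i) n =
        fls_const (phi i n) * (wave Z n * fls_const (psi i n) - S i n)"
      unfolding S by (simp add: algebra_simps)
  qed
  finally show ?thesis .
qed

lemma symmetry_flow_inverse:
  fixes da :: "'a::comm_ring_1 \<Rightarrow> 'a" and Z Zi :: "'a pdo" and phi psi :: "nat \<Rightarrow> 'a fn"
  assumes der_a: "is_derivation da"
    and Z: "pdo_order_le Z z" and Zi: "pdo_order_le Zi zi"
    and inv: "pdo_mult Z Zi = pdo_one" "pdo_mult Zi Z = pdo_one"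
    and flow_a: "pdo_map da Z = (\<lambda>j n. \<Sum>i<m.
       pdo_mult (pdo_fn (phi i)) (pdo_mult pdo_Dinv
         (pdo_mult (pdo_fn (shf 1 (psi i))) (pdo_mult pdo_Delta Z))) j n)"
  shows "pdo_mult (pdo_map da Zi) pdo_Dinv = (\<lambda>r n. - (\<Sum>i<m.
    pdo_mult (pdo_mult (pdo_mult Zi (pdo_fn (phi i))) pdo_Dinv) (pdo_fn (shf 1 (psi i))) r n))"
proof -
  interpret da: derivation da by (rule derivation.intro[OF der_a])
  have wf: "pdo_wf Z" "pdo_wf Zi" using Z Zi by (auto simp: pdo_wf_iff_order_le)
  define U where
    "U i = pdo_mult (pdo_fn (phi i)) (pdo_mult pdo_Dinv (pdo_mult (pdo_fn (shf 1 (psi i))) pdo_Delta))" for i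
  have "pdo_order_le (U i) (0 + (-1 + (0 + 1)))" for i
    unfolding U_def pdo_Dinv_eq_Dpow pdo_Delta_eq_Dpow
    by (intro pdo_order_le_mult pdo_order_le_fn pdo_order_le_Dpow)
  then have U: "pdo_order_le (U i) 0" for i by simp
  have UZ: "pdo_order_le (pdo_mult (U i) Z) (0 + z)" for i by (rule pdo_order_le_mult[OF U Z])
  have ZiU: "pdo_order_le (pdo_mult Zi (U i)) (zi + 0)" for i by (rule pdo_order_le_mult[OF Zi U])
  have Dinv: "pdo_order_le (pdo_Dinv :: 'a pdo) (-1)"
    by (simp add: pdo_Dinv_eq_Dpow pdo_order_le_Dpow)
  have "pdo_map da Z = (\<lambda>j n. \<Sum>i<m. pdo_mult (U i) Z j n)"
    unfolding flow_a U_def by (simp add: pdo_mult_assoc_wf wf)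
  then have "pdo_mult (pdo_map da Z) Zi = (\<lambda>r n. \<Sum>i<m. U i r n)"
    by (simp add: pdo_mult_sum_left[OF finite_lessThan UZ Zi] pdo_mult_assoc[OF U Z Zi] inv(1)
        pdo_mult_one_right)
  then have "pdo_map da Zi = (\<lambda>r n. - (\<Sum>i<m. pdo_mult Zi (U i) r n))"
    by (simp add: da.pdo_map_inverse[OF Z Zi inv] pdo_mult_sum_right[OF finite_lessThan Zi U])
  then have "pdo_mult (pdo_map da Zi) pdo_Dinv =
      (\<lambda>r n. - (\<Sum>i<m. pdo_mult (pdo_mult Zi (U i)) pdo_Dinv r n))"
    by (simp add: pdo_mult_neg_left[OF pdo_order_le_sum[OF ZiU] Dinv]
        pdo_mult_sum_left[OF finite_lessThan ZiU Dinv])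
  moreover have "pdo_mult (pdo_mult Zi (U i)) pdo_Dinv =
      pdo_mult (pdo_mult (pdo_mult Zi (pdo_fn (phi i))) pdo_Dinv) (pdo_fn (shf 1 (psi i)))" for i
    by (simp add: U_def pdo_mult_assoc_wf wf pdo_Delta_Dinv pdo_mult_one_right)
  ultimately show ?thesis by simp
qed

lemma cmap_wave_adj_symmetry_flow:
  fixes da :: "'a::comm_ring_1 \<Rightarrow> 'a" and Z Zi :: "'a pdo" and phi psi :: "nat \<Rightarrow> 'a fn"
  assumes der_a: "is_derivation da"
    and Z: "pdo_order_le Z z" and Zi: "pdo_order_le Zi zi"
    and inv: "pdo_mult Z Zi = pdo_one" "pdo_mult Zi Z = pdo_one"
    and flow_a: "pdo_map da Z = (\<lambda>j n. \<Sum>i<m.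
       pdo_mult (pdo_fn (phi i)) (pdo_mult pdo_Dinv
         (pdo_mult (pdo_fn (shf 1 (psi i))) (pdo_mult pdo_Delta Z))) j n)"
  shows "fls_cmap da (wave_adj Zi n) = - (\<Sum>i<m. fls_const (psi i n) *
    adj_exp_apply (pdo_shift (-1) (pdo_mult (pdo_mult Zi (pdo_fn (phi i))) pdo_Dinv)) n)"
proof -
  interpret da: derivation da by (rule derivation.intro[OF der_a])
  define Q where "Q i = pdo_shift (-1) (pdo_mult (pdo_mult Zi (pdo_fn (phi i))) pdo_Dinv)" for i
  have Q: "pdo_order_le (Q i) (zi - 1)" for i
    using pdo_order_le_shift_Dinv[OF pdo_order_le_mult[OF Zi pdo_order_le_fn]] by (simp add: Q_def)
  have QP: "pdo_order_le (pdo_mult (Q i) (pdo_fn (psi i))) (zi - 1)" for i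
    using pdo_order_le_mult[OF Q pdo_order_le_fn] by simp
  have "pdo_shift (-1) (pdo_mult (pdo_mult (pdo_mult Zi (pdo_fn (phi i))) pdo_Dinv) (pdo_fn (shf 1 (psi i))))
      = pdo_mult (Q i) (pdo_fn (psi i))" for i
    by (simp add: Q_def pdo_shift_mult[symmetric] pdo_shift_fn shf_def)
  then have "pdo_shift (-1) (pdo_mult (pdo_map da Zi) pdo_Dinv) =
      (\<lambda>r n. - (\<Sum>i<m. pdo_mult (Q i) (pdo_fn (psi i)) r n))"
    unfolding symmetry_flow_inverse[OF der_a Z Zi inv flow_a]
    by (simp add: pdo_shift_def fun_eq_iff)
  moreover have "pdo_map da (pdo_shift (-1) (pdo_mult Zi pdo_Dinv)) =
      pdo_shift (-1) (pdo_mult (pdo_map da Zi) pdo_Dinv)"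
    by (intro ext) (simp add: pdo_map_def pdo_shift_def pdo_Dinv_eq_Dpow pdo_mult_Dpow_right)
  ultimately have "fls_cmap da (wave_adj Zi n) =
      adj_exp_apply (\<lambda>r n. - (\<Sum>i<m. pdo_mult (Q i) (pdo_fn (psi i)) r n)) n"
    unfolding wave_adj_eq_adj_exp_apply by (simp add: da.cmap_adj_exp_apply[OF pdo_order_le_shift_Dinv[OF Zi]])
  also have "\<dots> = - (\<Sum>i<m. fls_const (psi i n) * adj_exp_apply (Q i) n)"
    by (simp add: adj_exp_apply_neg[OF pdo_order_le_sum[OF QP]] adj_exp_apply_sum[OF finite_lessThan QP]
        adj_exp_apply_mult_fn[OF Q])
  finally show ?thesis by (simp add: Q_def)
qed

lemma wave_adj_symmetry_flow:
  fixes dt :: "nat \<Rightarrow> 'a::comm_ring_1 \<Rightarrow> 'a" and da :: "'a \<Rightarrow> 'a"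
    and Z Zi L :: "'a pdo" and phi psi :: "nat \<Rightarrow> 'a fn" and T :: "nat \<Rightarrow> 'a fls fn"
  assumes der_t1: "is_derivation (dt 1)" and der_a: "is_derivation da"
    and Z: "pdo_order_le Z z" and z: "0 \<le> z" and Zi: "pdo_order_le Zi zi" and zi: "0 \<le> zi"
    and inv: "pdo_mult Z Zi = pdo_one" "pdo_mult Zi Z = pdo_one"
    and L_def: "L = pdo_mult Z (pdo_mult pdo_Delta Zi)"
    and flow_a: "pdo_map da Z = (\<lambda>j n. \<Sum>i<m.
       pdo_mult (pdo_fn (phi i)) (pdo_mult pdo_Dinv
         (pdo_mult (pdo_fn (shf 1 (psi i))) (pdo_mult pdo_Delta Z))) j n)"
    and T_sep: "\<And>i. i < m \<Longrightarrow>
       is_sep dt (-1) L (\<lambda>n. fls_const (phi i n)) (fdiff 1 (wave_adj Zi)) (T i)"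
  shows "fls_cmap da (wave_adj Zi n) = - (\<Sum>i<m. fls_const (psi i n) * T i n)"
proof -
  have "pdo_order_le L (z + (1 + zi))"
    unfolding L_def pdo_Delta_eq_Dpow by (intro pdo_order_le_mult pdo_order_le_Dpow Z Zi)
  with z zi show ?thesis
    unfolding cmap_wave_adj_symmetry_flow[OF der_a Z Zi inv flow_a]
    by (simp add: is_sep_wave_adj_eq[OF der_t1 Zi _ _ T_sep])
qed

theorem proposition4p1:
  fixes dt :: "nat \<Rightarrow> 'a::comm_ring_1 \<Rightarrow> 'a" and da :: "'a \<Rightarrow> 'a"
    and Z Zi L :: "'a pdo" and m :: nat
    and phi psi :: "nat \<Rightarrow> 'a fn"
    and S T :: "nat \<Rightarrow> 'a fls fn"
  assumes der_t: "\<And>k. k \<ge> 1 \<Longrightarrow> is_derivation (dt k)"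
    and der_a: "is_derivation da"
    and Z_wf: "pdo_wf Z" and Z_ord: "\<And>j. j > 0 \<Longrightarrow> Z j = (\<lambda>n. 0)"
    and Zi_wf: "pdo_wf Zi"
    and Z_inv: "pdo_mult Z Zi = pdo_one" "pdo_mult Zi Z = pdo_one"
    and L_def: "L = pdo_mult Z (pdo_mult pdo_Delta Zi)"
    and sato: "\<And>k. k \<ge> 1 \<Longrightarrow>
       pdo_map (dt k) Z = pdo_neg (pdo_mult (pdo_nonpos (pdo_pow L k)) Z)"
    and eig: "\<And>i. i < m \<Longrightarrow> is_eigenfunction dt L (phi i)"
    and adj_eig: "\<And>i. i < m \<Longrightarrow> is_adj_eigenfunction dt L (psi i)"
    and flow_a: "pdo_map da Z = (\<lambda>j n. \<Sum>i<m.
       pdo_mult (pdo_fn (phi i)) (pdo_mult pdo_Dinv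
         (pdo_mult (pdo_fn (shf 1 (psi i))) (pdo_mult pdo_Delta Z))) j n)"
    and S_sep: "\<And>i. i < m \<Longrightarrow>
       is_sep dt 1 L (wave Z) (\<lambda>n. fls_const (fdiff 1 (psi i) n)) (S i)"
    and T_sep: "\<And>i. i < m \<Longrightarrow>
       is_sep dt (-1) L (\<lambda>n. fls_const (phi i n)) (fdiff 1 (wave_adj Zi)) (T i)"
  shows "(\<forall>n. fls_cmap da (wave Z n) =
            (\<Sum>i<m. fls_const (phi i n) * (wave Z n * fls_const (psi i n) - S i n)))
       \<and> (\<forall>n. fls_cmap da (wave_adj Zi n) =
            - (\<Sum>i<m. fls_const (psi i n) * T i n))"
proof -
  have Z: "pdo_order_le Z 0"
    unfolding pdo_order_le_def using Z_ord by simp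
  obtain zi0 where "pdo_order_le Zi zi0"
    using Zi_wf by (auto simp: pdo_wf_iff_order_le)
  then have Zi: "pdo_order_le Zi (max zi0 0)"
    by (rule pdo_order_le_mono) simp
  have dt1: "is_derivation (dt 1)"
    by (rule der_t) simp
  show ?thesis
    using wave_symmetry_flow[OF dt1 der_a Z Zi _ L_def flow_a S_sep]
      wave_adj_symmetry_flow[OF dt1 der_a Z order_refl Zi _ Z_inv L_def flow_a T_sep]
    by simp
qed

end
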